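(* Let $(\mathfrak H_{-,+},\mathfrak H,\Gamma_0,\Gamma_1)$ be an m-boundary tuple for $\mathcal A^*$, where $\mathcal A$ is a closed densely defined symmetric operator in a Hilbert space $\mathfrak X$. Let $V$ be an arbitrary linear homeomorphism from $\mathfrak H$ onto $\mathfrak H_{-,+}$. Then $(\mathfrak H,V^{-1}\Gamma_0,V^\#\Gamma_1)$ is a boundary triple for $\mathcal A^*$.
   Context: Mixed-order duality: Hilbert spaces $\mathfrak H,\mathfrak H_{-,+},\mathfrak H_{+,-}$ with $\widetilde{\mathfrak H}_{\mp,\pm}:=\mathfrak H\cap\mathfrak H_{\mp,\pm}$ dense in $\mathfrak H$ and in $\mathfrak H_{\mp,\pm}$, forms $\|h\|^2_{\mathfrak H_{\mp,\pm}}$ on $\widetilde{\mathfrak H}_{\mp,\pm}$ closed in $\mathfrak H$, and $\|h\|_{\mathfrak H_{\pm,\mp}}=\sup_{0\ne g\in\widetilde{\mathfrak H}_{\mp,\pm}}|(g|h)_{\mathfrak H}|/\|g\|_{\mathfrak H_{\mp,\pm}}$ for $h\in\widetilde{\mathfrak H}_{\pm,\mp}$; $\langle\cdot|\cdot\rangle_{\mathfrak H}$ is the unique bounded sesquilinear extension of $(\cdot|\cdot)_{\mathfrak H}$ to $\mathfrak H_{-,+}\times\mathfrak H_{+,-}$, with $\langle h_{+,-}|h_{-,+}\rangle_{\mathfrak H}:=\overline{\langle h_{-,+}|h_{+,-}\rangle_{\mathfrak H}}$. An m-boundary tuple for $\mathcal A^*$ is $(\mathfrak H_{-,+},\mathfrak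 H,\Gamma_0,\Gamma_1)$ with linear $\Gamma_0:\mathrm{dom}\mathcal A^*\to\mathfrak H_{-,+}$, $\Gamma_1:\mathrm{dom}\mathcal A^*\to\mathfrak H_{+,-}$ such that (M1) $f\mapsto\{\Gamma_0f,\Gamma_1f\}$ maps $\mathrm{dom}\mathcal A^*$ onto $\mathfrak H_{-,+}\oplus\mathfrak H_{+,-}$ and (M2) $(\mathcal A^*f|g)_{\mathfrak X}-(f|\mathcal A^*g)_{\mathfrak X}=\langle\Gamma_1f|\Gamma_0g\rangle_{\mathfrak H}-\langle\Gamma_0f|\Gamma_1g\rangle_{\mathfrak H}$ for all $f,g$. The $\mathfrak H$-pairing-adjoint of $V$ is $V^\#:\mathfrak H_{+,-}\to\mathfrak H$ with $\langle Vf|g\rangle_{\mathfrak H}=(f|V^\#g)_{\mathfrak H}$ for $f\in\mathfrak H$, $g\in\mathfrak H_{+,-}$. A boundary triple $(\mathfrak H,\widehat\Gamma_0,\widehat\Gamma_1)$ for $\mathcal A^*$ consists of linear maps $\widehat\Gamma_j:\mathrm{dom}\mathcal A^*\to\mathfrak H$ such that $f\mapsto\{\widehat\Gamma_0f,\widehat\Gamma_1f\}$ maps $\mathrm{dom}\mathcal A^*$ onto $\mathfrak H\oplus\mathfrak H$ and $(\mathcal A^*f|g)_{\mathfrak X}-(f|\mathcal A^*g)_{\mathfrak X}=(\widehat\Gamma_1f|\widehat\Gamma_0g)_{\mathfrak H}-(\widehat\Gamma_0f|\widehat\Gamma_1g)_{\mathfrak H}$ for all $f,g\in\mathrm{dom}\mathcal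 A^*$. *)

theory Defs
  imports "HOL-Analysis.Analysis"
begin

class cvector = ab_group_add +
  fixes scaleC :: "complex \<Rightarrow> 'a \<Rightarrow> 'a" (infixr \<open>*\<^sub>C\<close> 75)
  assumes scaleC_add_right: "a *\<^sub>C (x + y) = a *\<^sub>C x + a *\<^sub>C y"
    and scaleC_add_left: "(a + b) *\<^sub>C x = a *\<^sub>C x + b *\<^sub>C x"
    and scaleC_scaleC: "a *\<^sub>C (b *\<^sub>C x) = (a * b) *\<^sub>C x"
    and scaleC_one: "1 *\<^sub>C x = x"

text \<open>A (complex) Hilbert space is a linear subspace S of an ambient complex vector space
  together with an inner product ip on S (linear in the first, conjugate linear in the
  second argument) such that S is complete for the induced norm.\<close>

definition csubspace :: "'a::cvector set \<Rightarrow> bool" where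
  "csubspace S \<longleftrightarrow> 0 \<in> S \<and> (\<forall>x\<in>S. \<forall>y\<in>S. x + y \<in> S) \<and> (\<forall>c. \<forall>x\<in>S. c *\<^sub>C x \<in> S)"

definition hnorm :: "('a \<Rightarrow> 'a \<Rightarrow> complex) \<Rightarrow> 'a \<Rightarrow> real" where
  "hnorm ip x = sqrt (Re (ip x x))"

definition inner_product_on :: "'a::cvector set \<Rightarrow> ('a \<Rightarrow> 'a \<Rightarrow> complex) \<Rightarrow> bool" where
  "inner_product_on S ip \<longleftrightarrow> csubspace S
     \<and> (\<forall>x\<in>S. \<forall>y\<in>S. \<forall>z\<in>S. ip (x + y) z = ip x z + ip y z)
     \<and> (\<forall>c. \<forall>x\<in>S. \<forall>y\<in>S. ip (c *\<^sub>C x) y = c * ip x y)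
     \<and> (\<forall>x\<in>S. \<forall>y\<in>S. ip y x = cnj (ip x y))
     \<and> (\<forall>x\<in>S. 0 \<le> Re (ip x x))
     \<and> (\<forall>x\<in>S. ip x x = 0 \<longrightarrow> x = 0)"

definition hcauchy :: "('a::cvector \<Rightarrow> 'a \<Rightarrow> complex) \<Rightarrow> (nat \<Rightarrow> 'a) \<Rightarrow> bool" where
  "hcauchy ip u \<longleftrightarrow> (\<forall>e>0. \<exists>N. \<forall>m\<ge>N. \<forall>n\<ge>N. hnorm ip (u m - u n) < e)"

definition hconverges :: "('a::cvector \<Rightarrow> 'a \<Rightarrow> complex) \<Rightarrow> (nat \<Rightarrow> 'a) \<Rightarrow> 'a \<Rightarrow> bool" where
  "hconverges ip u x \<longleftrightarrow> (\<lambda>n. hnorm ip (u n - x)) \<longlonglongrightarrow> 0"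

definition hilbert_space :: "'a::cvector set \<Rightarrow> ('a \<Rightarrow> 'a \<Rightarrow> complex) \<Rightarrow> bool" where
  "hilbert_space S ip \<longleftrightarrow> inner_product_on S ip
     \<and> (\<forall>u. (\<forall>n. u n \<in> S) \<and> hcauchy ip u \<longrightarrow> (\<exists>x\<in>S. hconverges ip u x))"

definition hdense :: "'a::cvector set \<Rightarrow> ('a \<Rightarrow> 'a \<Rightarrow> complex) \<Rightarrow> 'a set \<Rightarrow> bool" where
  "hdense S ip D \<longleftrightarrow> D \<subseteq> S \<and> (\<forall>x\<in>S. \<forall>e>0. \<exists>d\<in>D. hnorm ip (x - d) < e)"

definition hcontinuous_on ::
  "'a::cvector set \<Rightarrow> ('a \<Rightarrow> 'a \<Rightarrow> complex) \<Rightarrow> ('a \<Rightarrow> 'b::cvector) \<Rightarrow> ('b \<Rightarrow> 'b \<Rightarrow> complex) \<Rightarrow> bool" where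
  "hcontinuous_on S ip1 f ip2 \<longleftrightarrow>
     (\<forall>x\<in>S. \<forall>e>0. \<exists>d>0. \<forall>y\<in>S. hnorm ip1 (y - x) < d \<longrightarrow> hnorm ip2 (f y - f x) < e)"

definition clinear_on :: "'a::cvector set \<Rightarrow> ('a \<Rightarrow> 'b::cvector) \<Rightarrow> bool" where
  "clinear_on S f \<longleftrightarrow> (\<forall>x\<in>S. \<forall>y\<in>S. f (x + y) = f x + f y) \<and> (\<forall>c. \<forall>x\<in>S. f (c *\<^sub>C x) = c *\<^sub>C f x)"

definition linear_homeomorphism ::
  "'a::cvector set \<Rightarrow> ('a \<Rightarrow> 'a \<Rightarrow> complex) \<Rightarrow> 'b::cvector set \<Rightarrow> ('b \<Rightarrow> 'b \<Rightarrow> complex) \<Rightarrow> ('a \<Rightarrow> 'b) \<Rightarrow> bool" where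
  "linear_homeomorphism S ip1 T ip2 V \<longleftrightarrow> clinear_on S V \<and> bij_betw V S T
     \<and> hcontinuous_on S ip1 V ip2 \<and> hcontinuous_on T ip2 (inv_into S V) ip1"

text \<open>The form h \<mapsto> squared ipK-norm of h with domain D (a subset of the Hilbert space (H, ipH))
  is closed in H: whenever u n in D, u n \<rightarrow> h in H and (u n) is Cauchy for the form,
  then h \<in> D and the form of u n - h tends to 0.\<close>
definition closed_norm_form ::
  "'a::cvector set \<Rightarrow> ('a \<Rightarrow> 'a \<Rightarrow> complex) \<Rightarrow> 'a set \<Rightarrow> ('a \<Rightarrow> 'a \<Rightarrow> complex) \<Rightarrow> bool" where
  "closed_norm_form H ipH D ipK \<longleftrightarrow>
     (\<forall>u h. (\<forall>n. u n \<in> D) \<and> h \<in> H \<and> hconverges ipH u h \<and> hcauchy ipK u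
        \<longrightarrow> h \<in> D \<and> hconverges ipK u h)"

text \<open>Norm duality: for h in H \<inter> Hb, the Hb-norm of h equals
  sup over nonzero g in H \<inter> Ha of |(g|h)_H| / \<parallel>g\<parallel>_Ha (with the convention sup of the empty set = 0).\<close>
definition norm_dual ::
  "'a::cvector set \<Rightarrow> ('a \<Rightarrow> 'a \<Rightarrow> complex) \<Rightarrow> 'a set \<Rightarrow> ('a \<Rightarrow> 'a \<Rightarrow> complex) \<Rightarrow> 'a set \<Rightarrow> ('a \<Rightarrow> 'a \<Rightarrow> complex) \<Rightarrow> bool" where
  "norm_dual H ipH Ha ipA Hb ipB \<longleftrightarrow>
     (\<forall>h\<in>H \<inter> Hb.
        bdd_above ((\<lambda>g. cmod (ipH g h) / hnorm ipA g) ` ((H \<inter> Ha) - {0}))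
      \<and> hnorm ipB h = Sup (insert 0 ((\<lambda>g. cmod (ipH g h) / hnorm ipA g) ` ((H \<inter> Ha) - {0}))))"

text \<open>Mixed-order duality of H, Hmp (= H_{-,+}) and Hpm (= H_{+,-}), together with the
  pairing pr = \<langle>\<cdot>|\<cdot>\<rangle>_H on Hmp \<times> Hpm, characterised as the (unique) bounded sesquilinear
  extension of (\<cdot>|\<cdot>)_H from (H \<inter> Hmp) \<times> (H \<inter> Hpm).\<close>
definition mixed_order_duality ::
  "'a::cvector set \<Rightarrow> ('a \<Rightarrow> 'a \<Rightarrow> complex) \<Rightarrow> 'a set \<Rightarrow> ('a \<Rightarrow> 'a \<Rightarrow> complex)
   \<Rightarrow> 'a set \<Rightarrow> ('a \<Rightarrow> 'a \<Rightarrow> complex) \<Rightarrow> ('a \<Rightarrow> 'a \<Rightarrow> complex) \<Rightarrow> bool" where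
  "mixed_order_duality H ipH Hmp ipMP Hpm ipPM pr \<longleftrightarrow>
     hilbert_space H ipH \<and> hilbert_space Hmp ipMP \<and> hilbert_space Hpm ipPM
   \<and> hdense H ipH (H \<inter> Hmp) \<and> hdense Hmp ipMP (H \<inter> Hmp)
   \<and> hdense H ipH (H \<inter> Hpm) \<and> hdense Hpm ipPM (H \<inter> Hpm)
   \<and> closed_norm_form H ipH (H \<inter> Hmp) ipMP \<and> closed_norm_form H ipH (H \<inter> Hpm) ipPM
   \<and> norm_dual H ipH Hmp ipMP Hpm ipPM \<and> norm_dual H ipH Hpm ipPM Hmp ipMP
   \<and> (\<forall>a\<in>Hmp. \<forall>a'\<in>Hmp. \<forall>b\<in>Hpm. pr (a + a') b = pr a b + pr a' b)
   \<and> (\<forall>c. \<forall>a\<in>Hmp. \<forall>b\<in>Hpm. pr (c *\<^sub>C a) b = c * pr a b)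
   \<and> (\<forall>a\<in>Hmp. \<forall>b\<in>Hpm. \<forall>b'\<in>Hpm. pr a (b + b') = pr a b + pr a b')
   \<and> (\<forall>c. \<forall>a\<in>Hmp. \<forall>b\<in>Hpm. pr a (c *\<^sub>C b) = cnj c * pr a b)
   \<and> (\<exists>C. \<forall>a\<in>Hmp. \<forall>b\<in>Hpm. cmod (pr a b) \<le> C * hnorm ipMP a * hnorm ipPM b)
   \<and> (\<forall>a\<in>H \<inter> Hmp. \<forall>b\<in>H \<inter> Hpm. pr a b = ipH a b)"

text \<open>A linear operator in the Hilbert space (X, ipX) is given by its domain D and a map A.\<close>
definition closed_densely_defined_symmetric ::
  "'x::cvector set \<Rightarrow> ('x \<Rightarrow> 'x \<Rightarrow> complex) \<Rightarrow> 'x set \<Rightarrow> ('x \<Rightarrow> 'x) \<Rightarrow> bool" where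
  "closed_densely_defined_symmetric X ipX D A \<longleftrightarrow>
     csubspace D \<and> D \<subseteq> X \<and> A ` D \<subseteq> X \<and> clinear_on D A
   \<and> hdense X ipX D
   \<and> (\<forall>f\<in>D. \<forall>g\<in>D. ipX (A f) g = ipX f (A g))
   \<and> (\<forall>u f h. (\<forall>n. u n \<in> D) \<and> f \<in> X \<and> h \<in> X \<and> hconverges ipX u f
        \<and> hconverges ipX (\<lambda>n. A (u n)) h \<longrightarrow> f \<in> D \<and> A f = h)"

definition adj_dom :: "'x::cvector set \<Rightarrow> ('x \<Rightarrow> 'x \<Rightarrow> complex) \<Rightarrow> 'x set \<Rightarrow> ('x \<Rightarrow> 'x) \<Rightarrow> 'x set" where
  "adj_dom X ipX D A = {g\<in>X. \<exists>h\<in>X. \<forall>f\<in>D. ipX (A f) g = ipX f h}"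

definition adj :: "'x::cvector set \<Rightarrow> ('x \<Rightarrow> 'x \<Rightarrow> complex) \<Rightarrow> 'x set \<Rightarrow> ('x \<Rightarrow> 'x) \<Rightarrow> 'x \<Rightarrow> 'x" where
  "adj X ipX D A g = (THE h. h \<in> X \<and> (\<forall>f\<in>D. ipX (A f) g = ipX f h))"

definition m_boundary_tuple ::
  "'x::cvector set \<Rightarrow> ('x \<Rightarrow> 'x \<Rightarrow> complex) \<Rightarrow> 'x set \<Rightarrow> ('x \<Rightarrow> 'x)
   \<Rightarrow> 'a::cvector set \<Rightarrow> ('a \<Rightarrow> 'a \<Rightarrow> complex) \<Rightarrow> 'a set \<Rightarrow> ('a \<Rightarrow> 'a \<Rightarrow> complex)
   \<Rightarrow> 'a set \<Rightarrow> ('a \<Rightarrow> 'a \<Rightarrow> complex) \<Rightarrow> ('a \<Rightarrow> 'a \<Rightarrow> complex)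
   \<Rightarrow> ('x \<Rightarrow> 'a) \<Rightarrow> ('x \<Rightarrow> 'a) \<Rightarrow> bool" where
  "m_boundary_tuple X ipX D A H ipH Hmp ipMP Hpm ipPM pr G0 G1 \<longleftrightarrow>
     (let DS = adj_dom X ipX D A; As = adj X ipX D A in
       mixed_order_duality H ipH Hmp ipMP Hpm ipPM pr
     \<and> clinear_on DS G0 \<and> clinear_on DS G1
     \<and> (\<forall>f\<in>DS. G0 f \<in> Hmp \<and> G1 f \<in> Hpm)
     \<and> (\<forall>a\<in>Hmp. \<forall>b\<in>Hpm. \<exists>f\<in>DS. G0 f = a \<and> G1 f = b)
     \<and> (\<forall>f\<in>DS. \<forall>g\<in>DS. ipX (As f) g - ipX f (As g)
           = cnj (pr (G0 g) (G1 f)) - pr (G0 f) (G1 g)))"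

definition boundary_triple ::
  "'x::cvector set \<Rightarrow> ('x \<Rightarrow> 'x \<Rightarrow> complex) \<Rightarrow> 'x set \<Rightarrow> ('x \<Rightarrow> 'x)
   \<Rightarrow> 'a::cvector set \<Rightarrow> ('a \<Rightarrow> 'a \<Rightarrow> complex) \<Rightarrow> ('x \<Rightarrow> 'a) \<Rightarrow> ('x \<Rightarrow> 'a) \<Rightarrow> bool" where
  "boundary_triple X ipX D A H ipH G0 G1 \<longleftrightarrow>
     (let DS = adj_dom X ipX D A; As = adj X ipX D A in
       clinear_on DS G0 \<and> clinear_on DS G1
     \<and> (\<forall>f\<in>DS. G0 f \<in> H \<and> G1 f \<in> H)
     \<and> (\<forall>a\<in>H. \<forall>b\<in>H. \<exists>f\<in>DS. G0 f = a \<and> G1 f = b)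
     \<and> (\<forall>f\<in>DS. \<forall>g\<in>DS. ipX (As f) g - ipX f (As g)
           = ipH (G1 f) (G0 g) - ipH (G0 f) (G1 g)))"

definition pairing_adjoint ::
  "'a::cvector set \<Rightarrow> ('a \<Rightarrow> 'a \<Rightarrow> complex) \<Rightarrow> ('a \<Rightarrow> 'a \<Rightarrow> complex) \<Rightarrow> ('a \<Rightarrow> 'a) \<Rightarrow> 'a \<Rightarrow> 'a" where
  "pairing_adjoint H ipH pr V g = (THE u. u \<in> H \<and> (\<forall>f\<in>H. pr (V f) g = ipH f u))"

end

theory Submission
  imports Defs
begin

text \<open>The maps \<open>V\<^sup>-\<^sup>1 \<Gamma>\<^sub>0\<close> and \<open>V\<^sup># \<Gamma>\<^sub>1\<close> are linear with values in \<open>H\<close>, and Green's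
  identity carries over because \<open>\<langle>a|b\<rangle> = (V\<^sup>-\<^sup>1 a|V\<^sup># b)\<close> for \<open>a\<close> in \<open>H_{-,+}\<close> and \<open>b\<close>
  in \<open>H_{+,-}\<close>, which is the defining property of \<open>V\<^sup>#\<close>. The substance is that \<open>V\<^sup>#\<close> maps
  \<open>H_{+,-}\<close> onto \<open>H\<close>. Let \<open>pr_rep b\<close> be the Riesz representative in \<open>H_{-,+}\<close> of
  \<open>\<langle>\<cdot>|b\<rangle>\<close>. Norm duality on the dense subspace \<open>H \<inter> H_{+,-}\<close> shows that \<open>pr_rep\<close> is
  bounded below, so its range is closed; the other norm duality shows that no nonzero element
  of \<open>H_{-,+}\<close> pairs to zero with all of \<open>H_{+,-}\<close>, so its range is dense. Hence every
  bounded functional on \<open>H_{-,+}\<close> has the form \<open>\<langle>\<cdot>|g\<rangle>\<close>, and applying this to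
  \<open>a \<mapsto> (V\<^sup>-\<^sup>1 a|b)\<close> gives \<open>g\<close> with \<open>V\<^sup># g = b\<close>.\<close>

lemma scaleC_zero_left [simp]: "(0::complex) *\<^sub>C x = (0::'a::cvector)"
proof -
  have "(0::complex) *\<^sub>C x = 0 *\<^sub>C x + 0 *\<^sub>C x"
    using scaleC_add_left[of 0 0 x] by simp
  then show ?thesis by simp
qed

lemma scaleC_zero_right [simp]: "c *\<^sub>C (0::'a::cvector) = 0"
proof -
  have "c *\<^sub>C (0::'a) = c *\<^sub>C 0 + c *\<^sub>C 0"
    using scaleC_add_right[of c 0 0] by simp
  then show ?thesis by simp
qed

lemma scaleC_minus_one: "(-1::complex) *\<^sub>C x = - (x::'a::cvector)"
proof -
  have "0 = x + (-1::complex) *\<^sub>C x"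
    using scaleC_add_left[of 1 "-1" x] by (simp add: scaleC_one)
  then show ?thesis by (simp add: eq_neg_iff_add_eq_0 add.commute)
qed

lemma scaleC_diff_right: "c *\<^sub>C ((x::'a::cvector) - y) = c *\<^sub>C x - c *\<^sub>C y"
  using scaleC_add_right[of c "x - y" y] by (simp add: eq_diff_eq)

lemma scaleC_half_add_self: "(1/2::complex) *\<^sub>C ((x::'a::cvector) + x) = x"
  using scaleC_add_left[of "1/2" "1/2" x] by (simp add: scaleC_add_right scaleC_one)

lemma csubspace_diff:
  assumes "csubspace S" "x \<in> S" "y \<in> S"
  shows "x - y \<in> S"
  using assms scaleC_minus_one[of y] unfolding csubspace_def
  by (metis diff_conv_add_uminus)

lemma clinear_on_add: "clinear_on S f \<Longrightarrow> x \<in> S \<Longrightarrow> y \<in> S \<Longrightarrow> f (x + y) = f x + f y"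
  unfolding clinear_on_def by simp

lemma clinear_on_scale: "clinear_on S f \<Longrightarrow> x \<in> S \<Longrightarrow> f (c *\<^sub>C x) = c *\<^sub>C f x"
  unfolding clinear_on_def by simp

lemma clinear_on_compose:
  assumes "clinear_on S f" "f ` S \<subseteq> T" "clinear_on T g"
  shows "clinear_on S (\<lambda>x. g (f x))"
  using assms unfolding clinear_on_def image_subset_iff by simp

lemma clinear_on_inv_into:
  assumes S: "csubspace S" and f: "clinear_on S f" and bij: "bij_betw f S T"
  shows "clinear_on T (inv_into S f)"
proof -
  let ?g = "inv_into S f"
  have g_in: "?g a \<in> S" if "a \<in> T" for a
    using bij_betw_apply[OF bij_betw_inv_into[OF bij] that] .
  have f_g: "f (?g a) = a" if "a \<in> T" for a
    using bij_betw_inv_into_right[OF bij that] .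
  have g_f: "?g (f x) = x" if "x \<in> S" for x
    using bij_betw_inv_into_left[OF bij that] .
  have "?g (a + b) = ?g a + ?g b" if "a \<in> T" "b \<in> T" for a b
  proof -
    have sum_in: "?g a + ?g b \<in> S"
      using S g_in that unfolding csubspace_def by blast
    have "f (?g a + ?g b) = a + b"
      using clinear_on_add[OF f g_in g_in] f_g that by simp
    then show ?thesis using g_f[OF sum_in] by simp
  qed
  moreover have "?g (c *\<^sub>C a) = c *\<^sub>C ?g a" if "a \<in> T" for c a
  proof -
    have scaled_in: "c *\<^sub>C ?g a \<in> S"
      using S g_in that unfolding csubspace_def by blast
    have "f (c *\<^sub>C ?g a) = c *\<^sub>C a"
      using clinear_on_scale[OF f g_in] f_g that by simp
    then show ?thesis using g_f[OF scaled_in] by simp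
  qed
  ultimately show ?thesis unfolding clinear_on_def by blast
qed

definition bounded_functional_on ::
  "'a::cvector set \<Rightarrow> ('a \<Rightarrow> 'a \<Rightarrow> complex) \<Rightarrow> ('a \<Rightarrow> complex) \<Rightarrow> bool" where
  "bounded_functional_on S ip \<phi> \<longleftrightarrow>
     (\<forall>x\<in>S. \<forall>y\<in>S. \<phi> (x + y) = \<phi> x + \<phi> y) \<and> (\<forall>c. \<forall>x\<in>S. \<phi> (c *\<^sub>C x) = c * \<phi> x)
   \<and> (\<exists>K. \<forall>x\<in>S. cmod (\<phi> x) \<le> K * hnorm ip x)"

lemma bounded_functional_onI:
  assumes "\<And>x y. x \<in> S \<Longrightarrow> y \<in> S \<Longrightarrow> \<phi> (x + y) = \<phi> x + \<phi> y"
    and "\<And>c x. x \<in> S \<Longrightarrow> \<phi> (c *\<^sub>C x) = c * \<phi> x"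
    and "\<And>x. x \<in> S \<Longrightarrow> cmod (\<phi> x) \<le> K * hnorm ip x"
  shows "bounded_functional_on S ip \<phi>"
  using assms unfolding bounded_functional_on_def by blast

section \<open>Pre-Hilbert and Hilbert spaces\<close>

text \<open>Each Hilbert space here is a subset of a common ambient type with its own inner product,
  so the type-class based Hilbert space theory of the library does not apply.\<close>

locale pre_hilbert =
  fixes S :: "'a::cvector set" and ip :: "'a \<Rightarrow> 'a \<Rightarrow> complex"
  assumes inner_product_on: "inner_product_on S ip"
begin

lemma csubspace: "csubspace S"
  using inner_product_on unfolding inner_product_on_def by blast

lemma zero_in [simp]: "0 \<in> S"
  using csubspace unfolding csubspace_def by blast

lemma add_in [intro]: "x \<in> S \<Longrightarrow> y \<in> S \<Longrightarrow> x + y \<in> S"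
  using csubspace unfolding csubspace_def by blast

lemma scale_in [intro]: "x \<in> S \<Longrightarrow> c *\<^sub>C x \<in> S"
  using csubspace unfolding csubspace_def by blast

lemma diff_in [intro]: "x \<in> S \<Longrightarrow> y \<in> S \<Longrightarrow> x - y \<in> S"
  using csubspace csubspace_diff by blast

lemma ip_add_left [rule_format]: "\<forall>x\<in>S. \<forall>y\<in>S. \<forall>z\<in>S. ip (x + y) z = ip x z + ip y z"
  using inner_product_on unfolding inner_product_on_def by (elim conjE)

lemma ip_scale_left [rule_format]: "\<forall>c. \<forall>x\<in>S. \<forall>y\<in>S. ip (c *\<^sub>C x) y = c * ip x y"
  using inner_product_on unfolding inner_product_on_def by (elim conjE)

lemma ip_commute_cnj [rule_format]: "\<forall>x\<in>S. \<forall>y\<in>S. ip y x = cnj (ip x y)"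
  using inner_product_on unfolding inner_product_on_def by (elim conjE)

lemma Re_ip_self_nonneg: "x \<in> S \<Longrightarrow> 0 \<le> Re (ip x x)"
  using inner_product_on unfolding inner_product_on_def by (elim conjE) blast

lemma ip_self_eq_0: "x \<in> S \<Longrightarrow> ip x x = 0 \<Longrightarrow> x = 0"
  using inner_product_on unfolding inner_product_on_def by (elim conjE) blast

lemma ip_add_right:
  assumes x: "x \<in> S" and y: "y \<in> S" and z: "z \<in> S"
  shows "ip x (y + z) = ip x y + ip x z"
proof -
  have "ip x (y + z) = cnj (ip (y + z) x)" using ip_commute_cnj[OF add_in[OF y z] x] .
  also have "\<dots> = cnj (ip y x) + cnj (ip z x)" using ip_add_left[OF y z x] by simp
  also have "\<dots> = ip x y + ip x z" using ip_commute_cnj[OF y x] ip_commute_cnj[OF z x] by simp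
  finally show ?thesis .
qed

lemma ip_scale_right:
  assumes x: "x \<in> S" and y: "y \<in> S"
  shows "ip x (c *\<^sub>C y) = cnj c * ip x y"
proof -
  have "ip x (c *\<^sub>C y) = cnj (ip (c *\<^sub>C y) x)" using ip_commute_cnj[OF scale_in[OF y] x] .
  also have "\<dots> = cnj c * cnj (ip y x)" using ip_scale_left[OF y x] by simp
  also have "\<dots> = cnj c * ip x y" using ip_commute_cnj[OF y x] by simp
  finally show ?thesis .
qed

lemma ip_zero_left [simp]: "y \<in> S \<Longrightarrow> ip 0 y = 0"
  using ip_scale_left[of 0 y 0] by simp

lemma ip_zero_right [simp]: "y \<in> S \<Longrightarrow> ip y 0 = 0"
  using ip_scale_right[of y 0 0] by simp

lemma ip_diff_left: "x \<in> S \<Longrightarrow> y \<in> S \<Longrightarrow> z \<in> S \<Longrightarrow> ip (x - y) z = ip x z - ip y z"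
  using ip_add_left[of "x - y" y z] by (simp add: diff_in)

lemma ip_diff_right: "x \<in> S \<Longrightarrow> y \<in> S \<Longrightarrow> z \<in> S \<Longrightarrow> ip x (y - z) = ip x y - ip x z"
  using ip_add_right[of x "y - z" z] by (simp add: diff_in)

lemma ip_right_unique:
  assumes "u \<in> S" "u' \<in> S" "\<And>x. x \<in> S \<Longrightarrow> ip x u = ip x u'"
  shows "u = u'"
proof -
  have "ip (u - u') (u - u') = 0"
    using assms by (simp add: ip_diff_right diff_in)
  then show ?thesis using ip_self_eq_0 assms diff_in by fastforce
qed

lemma hnorm_nonneg: "x \<in> S \<Longrightarrow> 0 \<le> hnorm ip x"
  unfolding hnorm_def using Re_ip_self_nonneg by simp

lemma hnorm_square: "x \<in> S \<Longrightarrow> (hnorm ip x)\<^sup>2 = Re (ip x x)"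
  unfolding hnorm_def using Re_ip_self_nonneg by simp

lemma ip_self_eq_hnorm_square:
  assumes "x \<in> S"
  shows "ip x x = complex_of_real ((hnorm ip x)\<^sup>2)"
  using ip_commute_cnj[OF assms assms] hnorm_square[OF assms] by (simp add: complex_eq_iff)

lemma hnorm_zero [simp]: "hnorm ip 0 = 0"
  unfolding hnorm_def by simp

lemma hnorm_eq_0_iff: "x \<in> S \<Longrightarrow> hnorm ip x = 0 \<longleftrightarrow> x = 0"
  using ip_self_eq_hnorm_square ip_self_eq_0 by fastforce

lemma hnorm_pos: "x \<in> S \<Longrightarrow> x \<noteq> 0 \<Longrightarrow> 0 < hnorm ip x"
  using hnorm_eq_0_iff[of x] hnorm_nonneg[of x] by simp

lemma hnorm_scale:
  assumes x: "x \<in> S"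
  shows "hnorm ip (c *\<^sub>C x) = cmod c * hnorm ip x"
proof -
  have cx: "c *\<^sub>C x \<in> S" using x by blast
  have "ip (c *\<^sub>C x) (c *\<^sub>C x) = (c * cnj c) * ip x x"
    using x cx by (simp add: ip_scale_left ip_scale_right mult.assoc)
  also have "\<dots> = complex_of_real ((cmod c)\<^sup>2) * complex_of_real ((hnorm ip x)\<^sup>2)"
    by (simp only: complex_norm_square ip_self_eq_hnorm_square[OF x])
  also have "\<dots> = complex_of_real ((cmod c * hnorm ip x)\<^sup>2)"
    by (simp add: power_mult_distrib)
  finally have "(hnorm ip (c *\<^sub>C x))\<^sup>2 = (cmod c * hnorm ip x)\<^sup>2"
    using hnorm_square[OF cx] by simp
  then show ?thesis
    using hnorm_nonneg[OF x] hnorm_nonneg[OF cx] by (simp add: power2_eq_iff_nonneg)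
qed

lemma hnorm_minus_commute: "x \<in> S \<Longrightarrow> y \<in> S \<Longrightarrow> hnorm ip (x - y) = hnorm ip (y - x)"
  using hnorm_scale[of "x - y" "-1"] by (simp add: diff_in scaleC_minus_one)

lemma hnorm_add_square: "x \<in> S \<Longrightarrow> y \<in> S \<Longrightarrow>
  (hnorm ip (x + y))\<^sup>2 = (hnorm ip x)\<^sup>2 + (hnorm ip y)\<^sup>2 + 2 * Re (ip x y)"
  using ip_commute_cnj[of x y] by (simp add: hnorm_square ip_add_left ip_add_right add_in)

lemma hnorm_diff_square: "x \<in> S \<Longrightarrow> y \<in> S \<Longrightarrow>
  (hnorm ip (x - y))\<^sup>2 = (hnorm ip x)\<^sup>2 + (hnorm ip y)\<^sup>2 - 2 * Re (ip x y)"
  using ip_commute_cnj[of x y] by (simp add: hnorm_square ip_diff_left ip_diff_right diff_in)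

lemma parallelogram: "x \<in> S \<Longrightarrow> y \<in> S \<Longrightarrow>
  (hnorm ip (x + y))\<^sup>2 + (hnorm ip (x - y))\<^sup>2 = 2 * (hnorm ip x)\<^sup>2 + 2 * (hnorm ip y)\<^sup>2"
  using hnorm_add_square hnorm_diff_square by simp


lemma cauchy_schwarz:
  assumes x: "x \<in> S" and y: "y \<in> S"
  shows "cmod (ip x y) \<le> hnorm ip x * hnorm ip y"
proof (cases "y = 0")
  case True
  then show ?thesis using x by simp
next
  case False
  define r where "r = (hnorm ip y)\<^sup>2"
  have r: "r > 0" using hnorm_pos[OF y False] unfolding r_def by simp
  define a where "a = ip x y"
  define t where "t = a / complex_of_real r"
  have ty: "t *\<^sub>C y \<in> S" using y by blast
  have "0 \<le> (hnorm ip (x - t *\<^sub>C y))\<^sup>2" by simp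
  also have "\<dots> = (hnorm ip x)\<^sup>2 + (cmod t * hnorm ip y)\<^sup>2 - 2 * Re (cnj t * a)"
    using hnorm_diff_square[OF x ty] x y by (simp add: hnorm_scale ip_scale_right a_def)
  also have "cnj t * a = complex_of_real ((cmod a)\<^sup>2 / r)"
  proof -
    have "cnj t * a = (a * cnj a) / complex_of_real r" unfolding t_def by (simp add: mult.commute)
    then show ?thesis by (simp add: complex_norm_square[symmetric])
  qed
  also have "(cmod t * hnorm ip y)\<^sup>2 = (cmod a)\<^sup>2 / r"
  proof -
    have "cmod t = cmod a / r" unfolding t_def using r by (simp add: norm_divide)
    then have "(cmod t * hnorm ip y)\<^sup>2 = (cmod a)\<^sup>2 / r\<^sup>2 * r"
      by (simp add: power_mult_distrib power_divide r_def)
    then show ?thesis using r by (simp add: power2_eq_square)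
  qed
  finally have "(cmod a)\<^sup>2 \<le> (hnorm ip x * hnorm ip y)\<^sup>2"
    using r by (simp add: divide_le_eq r_def power_mult_distrib)
  then show ?thesis
    unfolding a_def by (rule power2_le_imp_le) (simp add: hnorm_nonneg x y)
qed

lemma hnorm_triangle:
  assumes x: "x \<in> S" and y: "y \<in> S"
  shows "hnorm ip (x + y) \<le> hnorm ip x + hnorm ip y"
proof -
  have "Re (ip x y) \<le> hnorm ip x * hnorm ip y"
    using cauchy_schwarz[OF x y] complex_Re_le_cmod order_trans by blast
  then have "(hnorm ip (x + y))\<^sup>2 \<le> (hnorm ip x + hnorm ip y)\<^sup>2"
    using hnorm_add_square[OF x y] by (simp add: power2_sum)
  then show ?thesis
    by (rule power2_le_imp_le) (simp add: hnorm_nonneg x y)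
qed

lemma hnorm_triangle_diff:
  "x \<in> S \<Longrightarrow> y \<in> S \<Longrightarrow> z \<in> S \<Longrightarrow> hnorm ip (x - z) \<le> hnorm ip (x - y) + hnorm ip (y - z)"
  using hnorm_triangle[of "x - y" "y - z"] by (simp add: diff_in)

lemma converges_imp_hcauchy:
  assumes u: "\<And>n. u n \<in> S" and x: "x \<in> S" and conv: "hconverges ip u x"
  shows "hcauchy ip u"
  unfolding hcauchy_def
proof (intro allI impI)
  fix e :: real assume e: "e > 0"
  have "\<forall>\<^sub>F n in sequentially. hnorm ip (u n - x) < e / 2"
    using conv e unfolding hconverges_def by (intro order_tendstoD(2)) auto
  then obtain N where N: "\<And>n. n \<ge> N \<Longrightarrow> hnorm ip (u n - x) < e / 2"
    unfolding eventually_sequentially by blast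
  have "hnorm ip (u m - u n) < e" if "m \<ge> N" "n \<ge> N" for m n
  proof -
    have "hnorm ip (u m - u n) \<le> hnorm ip (u m - x) + hnorm ip (u n - x)"
      using hnorm_triangle_diff[OF u x u] hnorm_minus_commute[OF x u] by simp
    then show ?thesis using N[OF that(1)] N[OF that(2)] by simp
  qed
  then show "\<exists>N. \<forall>m\<ge>N. \<forall>n\<ge>N. hnorm ip (u m - u n) < e" by blast
qed

lemma hconverges_unique:
  assumes u: "\<And>n. u n \<in> S" and x: "x \<in> S" and y: "y \<in> S"
    and ux: "hconverges ip u x" and uy: "hconverges ip u y"
  shows "x = y"
proof -
  have "hnorm ip (x - y) \<le> hnorm ip (u n - x) + hnorm ip (u n - y)" for n
    using hnorm_triangle_diff[OF x u y] hnorm_minus_commute[OF x u] by simp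
  moreover have "(\<lambda>n. hnorm ip (u n - x) + hnorm ip (u n - y)) \<longlonglongrightarrow> 0 + 0"
    using ux uy unfolding hconverges_def by (intro tendsto_add)
  ultimately have "hnorm ip (x - y) \<le> 0 + 0"
    by (intro LIMSEQ_le_const[of "\<lambda>n. hnorm ip (u n - x) + hnorm ip (u n - y)"]) auto
  then show ?thesis
    using hnorm_eq_0_iff[OF diff_in[OF x y]] hnorm_nonneg[OF diff_in[OF x y]] by simp
qed

lemma hnorm_diff_square_le_midpoint:
  assumes y: "y \<in> S" and z: "z \<in> S" and w: "w \<in> S"
    and d: "0 \<le> d" "d \<le> hnorm ip (w - (1/2::complex) *\<^sub>C (y + z))"
  shows "(hnorm ip (y - z))\<^sup>2 \<le> 2 * (hnorm ip (w - y))\<^sup>2 + 2 * (hnorm ip (w - z))\<^sup>2 - 4 * d\<^sup>2"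
proof -
  have a: "w - y \<in> S" and b: "w - z \<in> S" using w y z by auto
  have "(1/2::complex) *\<^sub>C ((w - y) + (w - z)) = (1/2::complex) *\<^sub>C ((w + w) - (y + z))"
    by (simp add: algebra_simps)
  also have "\<dots> = w - (1/2::complex) *\<^sub>C (y + z)"
    by (simp only: scaleC_diff_right scaleC_half_add_self)
  finally have "hnorm ip ((w - y) + (w - z)) = 2 * hnorm ip (w - (1/2::complex) *\<^sub>C (y + z))"
    using hnorm_scale[OF add_in[OF a b], of "1/2"] by simp
  then have "(2 * d)\<^sup>2 \<le> (hnorm ip ((w - y) + (w - z)))\<^sup>2"
    using d by (intro power_mono) auto
  moreover have "hnorm ip ((w - y) - (w - z)) = hnorm ip (y - z)"
    using hnorm_minus_commute[OF z y] by simp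
  ultimately show ?thesis
    using parallelogram[OF a b] by (simp add: power_mult_distrib)
qed

lemma minimizing_sequence_hcauchy:
  assumes M: "csubspace M" "M \<subseteq> S" and w: "w \<in> S" and y: "\<And>n. y n \<in> M"
    and d: "0 \<le> d" "\<And>z. z \<in> M \<Longrightarrow> d \<le> hnorm ip (w - z)"
    and close: "\<And>n. (hnorm ip (w - y n))\<^sup>2 \<le> d\<^sup>2 + inverse (real (Suc n))"
  shows "hcauchy ip y"
  unfolding hcauchy_def
proof (intro allI impI)
  fix e :: real assume e: "e > 0"
  have yS: "y n \<in> S" for n using y M(2) by blast
  have bound: "(hnorm ip (y m - y n))\<^sup>2 \<le> 2 * inverse (real (Suc m)) + 2 * inverse (real (Suc n))"
    for m n
  proof -
    have "(1/2::complex) *\<^sub>C (y m + y n) \<in> M" using M(1) y unfolding csubspace_def by blast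
    then have "d \<le> hnorm ip (w - (1/2::complex) *\<^sub>C (y m + y n))" using d(2) by blast
    then show ?thesis
      using hnorm_diff_square_le_midpoint[OF yS yS w d(1)] close[of m] close[of n] by fastforce
  qed
  obtain N where N: "inverse (real (Suc N)) < e\<^sup>2 / 4"
    using e reals_Archimedean by (metis divide_pos_pos zero_less_numeral zero_less_power)
  have "hnorm ip (y m - y n) < e" if "m \<ge> N" "n \<ge> N" for m n
  proof -
    have "inverse (real (Suc m)) \<le> inverse (real (Suc N))"
      "inverse (real (Suc n)) \<le> inverse (real (Suc N))"
      using that by (simp_all add: le_imp_inverse_le)
    then have "(hnorm ip (y m - y n))\<^sup>2 < e\<^sup>2" using bound[of m n] N by linarith
    then show ?thesis using e by (simp add: power_less_imp_less_base)
  qed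
  then show "\<exists>N. \<forall>m\<ge>N. \<forall>n\<ge>N. hnorm ip (y m - y n) < e" by blast
qed

text \<open>If \<open>m\<close> were not orthogonal to \<open>z\<close>, moving it along \<open>z\<close> by a small multiple of
  \<open>(w - m|z)\<close> would bring it closer to \<open>w\<close>.\<close>

lemma nearest_point_orthogonal:
  assumes M: "csubspace M" "M \<subseteq> S" and w: "w \<in> S" and m: "m \<in> M"
    and nearest: "\<And>y. y \<in> M \<Longrightarrow> hnorm ip (w - m) \<le> hnorm ip (w - y)"
    and z: "z \<in> M"
  shows "ip (w - m) z = 0"
proof -
  define e where "e = w - m"
  have zS: "z \<in> S" and eS: "e \<in> S" using z m w M(2) unfolding e_def by auto
  define a where "a = ip e z"
  define s where "s = 1 / ((hnorm ip z)\<^sup>2 + 1)"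
  have p: "0 < (hnorm ip z)\<^sup>2 + 1" by (simp add: add_nonneg_pos)
  have s0: "s > 0" and s1: "s * (hnorm ip z)\<^sup>2 < 1"
    unfolding s_def using p by (simp_all add: divide_less_eq)
  define t where "t = - complex_of_real s * a"
  have tz: "t *\<^sub>C z \<in> S" using zS by blast
  have "m - t *\<^sub>C z \<in> M" using M(1) m z csubspace_diff unfolding csubspace_def by blast
  then have "hnorm ip e \<le> hnorm ip (e + t *\<^sub>C z)"
    using nearest[of "m - t *\<^sub>C z"] unfolding e_def by (simp add: algebra_simps)
  then have "(hnorm ip e)\<^sup>2 \<le> (hnorm ip (e + t *\<^sub>C z))\<^sup>2"
    using hnorm_nonneg[OF eS] by (intro power_mono) auto
  also have "\<dots> = (hnorm ip e)\<^sup>2 + (cmod t * hnorm ip z)\<^sup>2 + 2 * Re (cnj t * a)"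
    using hnorm_add_square[OF eS tz] eS zS by (simp add: hnorm_scale ip_scale_right a_def)
  also have "cnj t * a = - complex_of_real (s * (cmod a)\<^sup>2)"
  proof -
    have "cnj t * a = - complex_of_real s * (a * cnj a)" unfolding t_def by (simp add: mult_ac)
    then show ?thesis by (simp add: complex_norm_square[symmetric])
  qed
  also have "cmod t = s * cmod a" unfolding t_def using s0 by (simp add: norm_mult)
  finally have "0 \<le> s * (cmod a)\<^sup>2 * (s * (hnorm ip z)\<^sup>2 - 2)"
    by (simp add: power_mult_distrib algebra_simps power2_eq_square)
  moreover have "s * (hnorm ip z)\<^sup>2 - 2 < 0" using s1 by simp
  ultimately have "s * (cmod a)\<^sup>2 \<le> 0" by (simp add: mult_le_0_iff zero_le_mult_iff)
  then have "a = 0" using s0 by (simp add: mult_le_0_iff)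
  then show ?thesis unfolding a_def e_def .
qed

definition hinfdist :: "'a \<Rightarrow> 'a set \<Rightarrow> real" where
  "hinfdist w M = (INF z\<in>M. hnorm ip (w - z))"

lemma bdd_below_hnorm_diff: "M \<subseteq> S \<Longrightarrow> w \<in> S \<Longrightarrow> bdd_below ((\<lambda>z. hnorm ip (w - z)) ` M)"
  by (intro bdd_belowI2[of _ 0]) (auto intro: hnorm_nonneg)

lemma hinfdist_le: "M \<subseteq> S \<Longrightarrow> w \<in> S \<Longrightarrow> z \<in> M \<Longrightarrow> hinfdist w M \<le> hnorm ip (w - z)"
  unfolding hinfdist_def by (rule cINF_lower[OF bdd_below_hnorm_diff])

lemma hinfdist_nonneg: "M \<noteq> {} \<Longrightarrow> M \<subseteq> S \<Longrightarrow> w \<in> S \<Longrightarrow> 0 \<le> hinfdist w M"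
  unfolding hinfdist_def by (intro cINF_greatest) (auto intro: hnorm_nonneg)

lemma hinfdist_less:
  "M \<noteq> {} \<Longrightarrow> M \<subseteq> S \<Longrightarrow> w \<in> S \<Longrightarrow> hinfdist w M < r \<Longrightarrow> \<exists>z\<in>M. hnorm ip (w - z) < r"
  unfolding hinfdist_def using cINF_less_iff[OF _ bdd_below_hnorm_diff] by blast

definition seq_closed :: "'a set \<Rightarrow> bool" where
  "seq_closed M \<longleftrightarrow> (\<forall>u x. (\<forall>n. u n \<in> M) \<and> x \<in> S \<and> hconverges ip u x \<longrightarrow> x \<in> M)"

lemma bounded_functional_on_diff:
  assumes "bounded_functional_on S ip \<phi>" "x \<in> S" "y \<in> S"
  shows "\<phi> (x - y) = \<phi> x - \<phi> y"
proof -
  have "\<phi> ((x - y) + y) = \<phi> (x - y) + \<phi> y"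
    using assms diff_in unfolding bounded_functional_on_def by blast
  then show ?thesis by (simp add: eq_diff_eq)
qed

lemma bounded_functional_on_zero:
  "bounded_functional_on S ip \<phi> \<Longrightarrow> \<phi> 0 = 0"
  using bounded_functional_on_diff[of \<phi> 0 0] by simp

lemma csubspace_kernel:
  assumes "bounded_functional_on S ip \<phi>"
  shows "csubspace {x \<in> S. \<phi> x = 0}"
  using assms bounded_functional_on_zero[OF assms]
  unfolding csubspace_def bounded_functional_on_def by auto

lemma seq_closed_kernel:
  assumes \<phi>: "bounded_functional_on S ip \<phi>"
  shows "seq_closed {x \<in> S. \<phi> x = 0}"
  unfolding seq_closed_def
proof (intro allI impI)
  fix u x assume "(\<forall>n. u n \<in> {x \<in> S. \<phi> x = 0}) \<and> x \<in> S \<and> hconverges ip u x"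
  then have uS: "\<And>n. u n \<in> S" and u0: "\<And>n. \<phi> (u n) = 0" and x: "x \<in> S"
    and lim: "(\<lambda>n. hnorm ip (u n - x)) \<longlonglongrightarrow> 0"
    unfolding hconverges_def by auto
  obtain K where K: "\<And>y. y \<in> S \<Longrightarrow> cmod (\<phi> y) \<le> K * hnorm ip y"
    using \<phi> unfolding bounded_functional_on_def by blast
  have "cmod (\<phi> x) \<le> K * hnorm ip (u n - x)" for n
    using K[OF diff_in[OF x uS]] bounded_functional_on_diff[OF \<phi> x uS] u0
      hnorm_minus_commute[OF x uS] by simp
  moreover have "(\<lambda>n. K * hnorm ip (u n - x)) \<longlonglongrightarrow> K * 0"
    by (intro tendsto_intros lim)
  ultimately have "cmod (\<phi> x) \<le> K * 0"
    by (intro LIMSEQ_le_const[of "\<lambda>n. K * hnorm ip (u n - x)"]) auto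
  then show "x \<in> {x \<in> S. \<phi> x = 0}" using x by simp
qed

end

locale hilbert =
  fixes S :: "'a::cvector set" and ip :: "'a \<Rightarrow> 'a \<Rightarrow> complex"
  assumes hilbert_space: "hilbert_space S ip"

sublocale hilbert \<subseteq> pre_hilbert
  using hilbert_space unfolding hilbert_space_def by unfold_locales blast

context hilbert
begin

lemma complete: "(\<And>n. u n \<in> S) \<Longrightarrow> hcauchy ip u \<Longrightarrow> \<exists>x\<in>S. hconverges ip u x"
  using hilbert_space unfolding hilbert_space_def by blast

lemma nearest_point_exists:
  assumes M: "csubspace M" "M \<subseteq> S" "seq_closed M" and w: "w \<in> S"
  obtains m where "m \<in> M" "\<And>y. y \<in> M \<Longrightarrow> hnorm ip (w - m) \<le> hnorm ip (w - y)"
proof -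
  define d where "d = hinfdist w M"
  have M0: "M \<noteq> {}" using M(1) unfolding csubspace_def by blast
  have d0: "0 \<le> d" and d_le: "\<And>z. z \<in> M \<Longrightarrow> d \<le> hnorm ip (w - z)"
    unfolding d_def using hinfdist_nonneg[OF M0 M(2) w] hinfdist_le[OF M(2) w] by auto
  have "\<exists>y\<in>M. hnorm ip (w - y) < sqrt (d\<^sup>2 + inverse (real (Suc n)))" for n
  proof -
    have "d < sqrt (d\<^sup>2 + inverse (real (Suc n)))"
      using d0 real_sqrt_less_mono[of "d\<^sup>2" "d\<^sup>2 + inverse (real (Suc n))"] by simp
    then show ?thesis using hinfdist_less[OF M0 M(2) w] unfolding d_def by blast
  qed
  then obtain y where y: "\<And>n. y n \<in> M"
    and close: "\<And>n. hnorm ip (w - y n) < sqrt (d\<^sup>2 + inverse (real (Suc n)))"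
    by metis
  have yS: "y n \<in> S" for n using y M(2) by blast
  have close_square: "(hnorm ip (w - y n))\<^sup>2 \<le> d\<^sup>2 + inverse (real (Suc n))" for n
  proof -
    have "(hnorm ip (w - y n))\<^sup>2 \<le> (sqrt (d\<^sup>2 + inverse (real (Suc n))))\<^sup>2"
      using close[of n] hnorm_nonneg[OF diff_in[OF w yS]] by (intro power_mono) auto
    then show ?thesis by simp
  qed
  have "hcauchy ip y"
    using minimizing_sequence_hcauchy[of M w y d, OF M(1,2) w y d0 d_le close_square] .
  then obtain m where m: "m \<in> S" "hconverges ip y m" using complete yS by blast
  show ?thesis
  proof (rule that)
    show "m \<in> M" using M(3) y m unfolding seq_closed_def by blast
    have "hnorm ip (w - m) \<le> sqrt (d\<^sup>2 + inverse (real (Suc n))) + hnorm ip (y n - m)" for n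
      using hnorm_triangle_diff[OF w yS m(1), of n] close[of n] by simp
    moreover have "(\<lambda>n. sqrt (d\<^sup>2 + inverse (real (Suc n))) + hnorm ip (y n - m))
        \<longlonglongrightarrow> sqrt (d\<^sup>2 + 0) + 0"
      using m(2) unfolding hconverges_def by (intro tendsto_intros LIMSEQ_inverse_real_of_nat)
    ultimately have "hnorm ip (w - m) \<le> sqrt (d\<^sup>2 + 0) + 0"
      by (intro LIMSEQ_le_const[of "\<lambda>n. sqrt (d\<^sup>2 + inverse (real (Suc n))) + hnorm ip (y n - m)"])
        auto
    then show "hnorm ip (w - m) \<le> hnorm ip (w - y')" if "y' \<in> M" for y'
      using d0 d_le[OF that] by simp
  qed
qed

lemma orthogonal_projection_exists:
  assumes "csubspace M" "M \<subseteq> S" "seq_closed M" "w \<in> S"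
  obtains m where "m \<in> M" "\<And>z. z \<in> M \<Longrightarrow> ip (w - m) z = 0"
  using nearest_point_exists[OF assms] nearest_point_orthogonal[OF assms(1,2,4)] by metis

lemma riesz_representation:
  assumes \<phi>: "bounded_functional_on S ip \<phi>"
  obtains u where "u \<in> S" "\<And>x. x \<in> S \<Longrightarrow> \<phi> x = ip x u"
proof (cases "\<forall>x\<in>S. \<phi> x = 0")
  case True
  then show ?thesis using that[of 0] by simp
next
  case False
  then obtain x0 where x0: "x0 \<in> S" "\<phi> x0 \<noteq> 0" by blast
  define N where "N = {x \<in> S. \<phi> x = 0}"
  obtain m where m: "m \<in> N" and orth: "\<And>y. y \<in> N \<Longrightarrow> ip (x0 - m) y = 0"
    using orthogonal_projection_exists[OF csubspace_kernel[OF \<phi>] _ seq_closed_kernel[OF \<phi>] x0(1)]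
    unfolding N_def by blast
  define z where "z = x0 - m"
  have mS: "m \<in> S" and zS: "z \<in> S" using m x0(1) unfolding N_def z_def by auto
  have \<phi>z: "\<phi> z = \<phi> x0"
    using bounded_functional_on_diff[OF \<phi> x0(1) mS] m unfolding z_def N_def by simp
  then have "z \<noteq> 0" using bounded_functional_on_zero[OF \<phi>] x0(2) by auto
  then have izz: "ip z z \<noteq> 0" using ip_self_eq_0[OF zS] by blast
  have izz_real: "cnj (ip z z) = ip z z" using ip_commute_cnj[OF zS zS] by simp
  show ?thesis
  proof (rule that)
    show "(cnj (\<phi> z) / ip z z) *\<^sub>C z \<in> S" using zS by blast
    fix x assume x: "x \<in> S"
    define c where "c = \<phi> x / \<phi> z"
    have cz: "c *\<^sub>C z \<in> S" using zS by blast
    have "\<phi> (x - c *\<^sub>C z) = 0"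
      using bounded_functional_on_diff[OF \<phi> x cz] \<phi> zS x0(2) \<phi>z
      unfolding bounded_functional_on_def c_def by simp
    then have "ip z (x - c *\<^sub>C z) = 0" using orth x cz unfolding z_def N_def by blast
    then have "ip z x = cnj c * ip z z" by (simp add: ip_diff_right ip_scale_right x zS cz)
    then have "ip x z = c * ip z z" using ip_commute_cnj[OF zS x] izz_real by simp
    then show "\<phi> x = ip x ((cnj (\<phi> z) / ip z z) *\<^sub>C z)"
      using izz x0(2) \<phi>z izz_real by (simp add: ip_scale_right x zS c_def)
  qed
qed

end

lemma hcontinuous_clinear_bounded:
  assumes S: "inner_product_on S ip1" and T: "inner_product_on T ip2"
    and f: "clinear_on S f" and f_in: "\<And>x. x \<in> S \<Longrightarrow> f x \<in> T"
    and cont: "hcontinuous_on S ip1 f ip2"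
  obtains K where "\<And>x. x \<in> S \<Longrightarrow> hnorm ip2 (f x) \<le> K * hnorm ip1 x"
proof -
  interpret S: pre_hilbert S ip1 using S by unfold_locales
  interpret T: pre_hilbert T ip2 using T by unfold_locales
  have f_scale: "f (c *\<^sub>C x) = c *\<^sub>C f x" if "x \<in> S" for c x
    using clinear_on_scale[OF f that] .
  have f0: "f 0 = 0" using f_scale[of 0 0] by simp
  obtain d where d: "d > 0" and near0: "\<And>y. y \<in> S \<Longrightarrow> hnorm ip1 y < d \<Longrightarrow> hnorm ip2 (f y) < 1"
    using cont S.zero_in f0 unfolding hcontinuous_on_def by (metis diff_zero zero_less_one)
  have "hnorm ip2 (f y) \<le> 2 / d * hnorm ip1 y" if y: "y \<in> S" for y
  proof (cases "y = 0")
    case True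
    then show ?thesis using f0 by simp
  next
    case False
    define c where "c = d / (2 * hnorm ip1 y)"
    have ny: "hnorm ip1 y > 0" using S.hnorm_pos[OF y False] .
    then have c: "c > 0" unfolding c_def using d by simp
    have "hnorm ip1 (complex_of_real c *\<^sub>C y) = c * hnorm ip1 y"
      using S.hnorm_scale[OF y] c by simp
    also have "\<dots> = d / 2" unfolding c_def using ny by simp
    finally have "hnorm ip2 (f (complex_of_real c *\<^sub>C y)) < 1"
      using near0 y d by (simp add: S.scale_in)
    then have "c * hnorm ip2 (f y) < 1"
      using f_scale[OF y] T.hnorm_scale[OF f_in[OF y]] c by simp
    then have "hnorm ip2 (f y) < 1 / c" using c by (simp add: field_simps)
    also have "1 / c = 2 / d * hnorm ip1 y" unfolding c_def using d ny by simp
    finally show ?thesis by simp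
  qed
  then show ?thesis by (rule that)
qed

section \<open>The pairing of a mixed-order duality\<close>

locale mixed_duality =
  fixes H :: "'a::cvector set" and ipH :: "'a \<Rightarrow> 'a \<Rightarrow> complex"
    and Hmp :: "'a set" and ipMP :: "'a \<Rightarrow> 'a \<Rightarrow> complex"
    and Hpm :: "'a set" and ipPM :: "'a \<Rightarrow> 'a \<Rightarrow> complex"
    and pr :: "'a \<Rightarrow> 'a \<Rightarrow> complex"
  assumes mixed_order_duality: "mixed_order_duality H ipH Hmp ipMP Hpm ipPM pr"
begin

sublocale H: hilbert H ipH
  using mixed_order_duality unfolding mixed_order_duality_def by (elim conjE) (rule hilbert.intro)

sublocale MP: hilbert Hmp ipMP
  using mixed_order_duality unfolding mixed_order_duality_def by (elim conjE) (rule hilbert.intro)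

sublocale PM: hilbert Hpm ipPM
  using mixed_order_duality unfolding mixed_order_duality_def by (elim conjE) (rule hilbert.intro)

lemma pr_add_left [rule_format]:
  "\<forall>a\<in>Hmp. \<forall>a'\<in>Hmp. \<forall>b\<in>Hpm. pr (a + a') b = pr a b + pr a' b"
  using mixed_order_duality unfolding mixed_order_duality_def by (elim conjE)

lemma pr_scale_left [rule_format]: "\<forall>c. \<forall>a\<in>Hmp. \<forall>b\<in>Hpm. pr (c *\<^sub>C a) b = c * pr a b"
  using mixed_order_duality unfolding mixed_order_duality_def by (elim conjE)

lemma pr_add_right [rule_format]:
  "\<forall>a\<in>Hmp. \<forall>b\<in>Hpm. \<forall>b'\<in>Hpm. pr a (b + b') = pr a b + pr a b'"
  using mixed_order_duality unfolding mixed_order_duality_def by (elim conjE)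

lemma pr_scale_right [rule_format]: "\<forall>c. \<forall>a\<in>Hmp. \<forall>b\<in>Hpm. pr a (c *\<^sub>C b) = cnj c * pr a b"
  using mixed_order_duality unfolding mixed_order_duality_def by (elim conjE)

lemma pr_eq_ipH:
  assumes "a \<in> H" "a \<in> Hmp" "b \<in> H" "b \<in> Hpm"
  shows "pr a b = ipH a b"
proof -
  have "\<forall>a\<in>H \<inter> Hmp. \<forall>b\<in>H \<inter> Hpm. pr a b = ipH a b"
    using mixed_order_duality unfolding mixed_order_duality_def by (elim conjE)
  with assms show ?thesis by blast
qed

lemma pr_diff_left: "a \<in> Hmp \<Longrightarrow> a' \<in> Hmp \<Longrightarrow> b \<in> Hpm \<Longrightarrow> pr (a - a') b = pr a b - pr a' b"
  using pr_add_left[of "a - a'" a' b] by (simp add: MP.diff_in)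

lemma hdense_Hmp: "hdense Hmp ipMP (H \<inter> Hmp)"
  using mixed_order_duality unfolding mixed_order_duality_def by (elim conjE)

lemma hdense_Hpm: "hdense Hpm ipPM (H \<inter> Hpm)"
  using mixed_order_duality unfolding mixed_order_duality_def by (elim conjE)

lemma hnorm_Hpm_eq_Sup:
  assumes "g \<in> H" "g \<in> Hpm"
  shows "hnorm ipPM g = Sup (insert 0 ((\<lambda>h. cmod (ipH h g) / hnorm ipMP h) ` (H \<inter> Hmp - {0})))"
proof -
  have "norm_dual H ipH Hmp ipMP Hpm ipPM"
    using mixed_order_duality unfolding mixed_order_duality_def by (elim conjE)
  with assms show ?thesis unfolding norm_dual_def by blast
qed

lemma hnorm_Hmp_eq_Sup:
  assumes "h \<in> H" "h \<in> Hmp"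
  shows "hnorm ipMP h = Sup (insert 0 ((\<lambda>g. cmod (ipH g h) / hnorm ipPM g) ` (H \<inter> Hpm - {0})))"
proof -
  have "norm_dual H ipH Hpm ipPM Hmp ipMP"
    using mixed_order_duality unfolding mixed_order_duality_def by (elim conjE)
  with assms show ?thesis unfolding norm_dual_def by blast
qed

lemma hnorm_Hpm_le:
  assumes g: "g \<in> H" "g \<in> Hpm" and B: "0 \<le> B"
    and bound: "\<And>h. h \<in> H \<Longrightarrow> h \<in> Hmp \<Longrightarrow> cmod (pr h g) \<le> B * hnorm ipMP h"
  shows "hnorm ipPM g \<le> B"
  unfolding hnorm_Hpm_eq_Sup[OF g]
proof (rule cSup_least)
  fix x assume "x \<in> insert 0 ((\<lambda>h. cmod (ipH h g) / hnorm ipMP h) ` (H \<inter> Hmp - {0}))"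
  then consider "x = 0"
    | h where "h \<in> H" "h \<in> Hmp" "h \<noteq> 0" "x = cmod (ipH h g) / hnorm ipMP h"
    by blast
  then show "x \<le> B"
  proof cases
    case 1
    then show ?thesis using B by simp
  next
    case (2 h)
    have "cmod (ipH h g) \<le> B * hnorm ipMP h"
      using bound[OF 2(1,2)] pr_eq_ipH[OF 2(1,2) g] by simp
    then show ?thesis using MP.hnorm_pos[OF 2(2,3)] 2(4) by (simp add: divide_le_eq)
  qed
qed simp

lemma hnorm_Hmp_le:
  assumes h: "h \<in> H" "h \<in> Hmp" and B: "0 \<le> B"
    and bound: "\<And>g. g \<in> H \<Longrightarrow> g \<in> Hpm \<Longrightarrow> cmod (pr h g) \<le> B * hnorm ipPM g"
  shows "hnorm ipMP h \<le> B"
  unfolding hnorm_Hmp_eq_Sup[OF h]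
proof (rule cSup_least)
  fix x assume "x \<in> insert 0 ((\<lambda>g. cmod (ipH g h) / hnorm ipPM g) ` (H \<inter> Hpm - {0}))"
  then consider "x = 0"
    | g where "g \<in> H" "g \<in> Hpm" "g \<noteq> 0" "x = cmod (ipH g h) / hnorm ipPM g"
    by blast
  then show "x \<le> B"
  proof cases
    case 1
    then show ?thesis using B by simp
  next
    case (2 g)
    have "cmod (ipH g h) \<le> B * hnorm ipPM g"
      using bound[OF 2(1,2)] pr_eq_ipH[OF h 2(1,2)] H.ip_commute_cnj[OF h(1) 2(1)] by simp
    then show ?thesis using PM.hnorm_pos[OF 2(2,3)] 2(4) by (simp add: divide_le_eq)
  qed
qed simp

definition pr_bound :: real where
  "pr_bound = (SOME C. 0 \<le> C \<and> (\<forall>a\<in>Hmp. \<forall>b\<in>Hpm. cmod (pr a b) \<le> C * hnorm ipMP a * hnorm ipPM b))"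

lemma pr_bound_spec: "0 \<le> pr_bound \<and> (\<forall>a\<in>Hmp. \<forall>b\<in>Hpm. cmod (pr a b) \<le> pr_bound * hnorm ipMP a * hnorm ipPM b)"
proof -
  have "\<exists>C. \<forall>a\<in>Hmp. \<forall>b\<in>Hpm. cmod (pr a b) \<le> C * hnorm ipMP a * hnorm ipPM b"
    using mixed_order_duality unfolding mixed_order_duality_def by (elim conjE)
  then obtain C where C: "\<forall>a\<in>Hmp. \<forall>b\<in>Hpm. cmod (pr a b) \<le> C * hnorm ipMP a * hnorm ipPM b"
    by blast
  have "cmod (pr a b) \<le> \<bar>C\<bar> * hnorm ipMP a * hnorm ipPM b" if "a \<in> Hmp" "b \<in> Hpm" for a b
  proof -
    have "C * hnorm ipMP a * hnorm ipPM b \<le> \<bar>C\<bar> * hnorm ipMP a * hnorm ipPM b"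
      using MP.hnorm_nonneg PM.hnorm_nonneg that by (intro mult_right_mono) auto
    then show ?thesis using C that by fastforce
  qed
  then have "0 \<le> \<bar>C\<bar> \<and> (\<forall>a\<in>Hmp. \<forall>b\<in>Hpm. cmod (pr a b) \<le> \<bar>C\<bar> * hnorm ipMP a * hnorm ipPM b)"
    by simp
  then show ?thesis unfolding pr_bound_def by (rule someI)
qed

lemma pr_bound_nonneg: "0 \<le> pr_bound"
  using pr_bound_spec by blast

lemma cmod_pr_le: "a \<in> Hmp \<Longrightarrow> b \<in> Hpm \<Longrightarrow> cmod (pr a b) \<le> pr_bound * hnorm ipMP a * hnorm ipPM b"
  using pr_bound_spec by blast

lemma bounded_functional_on_pr_left:
  assumes b: "b \<in> Hpm"
  shows "bounded_functional_on Hmp ipMP (\<lambda>a. pr a b)"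
proof (rule bounded_functional_onI[where K = "pr_bound * hnorm ipPM b"])
  show "pr (x + y) b = pr x b + pr y b" if "x \<in> Hmp" "y \<in> Hmp" for x y
    by (simp add: pr_add_left that b)
  show "pr (c *\<^sub>C x) b = c * pr x b" if "x \<in> Hmp" for c x
    by (simp add: pr_scale_left that b)
  show "cmod (pr x b) \<le> pr_bound * hnorm ipPM b * hnorm ipMP x" if "x \<in> Hmp" for x
    using cmod_pr_le[OF that b] by (simp add: mult_ac)
qed

definition pr_rep :: "'a \<Rightarrow> 'a" where
  "pr_rep b = (SOME w. w \<in> Hmp \<and> (\<forall>a\<in>Hmp. pr a b = ipMP a w))"

lemma pr_rep_spec:
  assumes "b \<in> Hpm"
  shows "pr_rep b \<in> Hmp \<and> (\<forall>a\<in>Hmp. pr a b = ipMP a (pr_rep b))"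
proof -
  obtain w where w: "w \<in> Hmp" "\<And>a. a \<in> Hmp \<Longrightarrow> pr a b = ipMP a w"
    using MP.riesz_representation[OF bounded_functional_on_pr_left[OF assms]] by blast
  then have "w \<in> Hmp \<and> (\<forall>a\<in>Hmp. pr a b = ipMP a w)" by blast
  then show ?thesis unfolding pr_rep_def by (rule someI)
qed

lemma pr_rep_in: assumes "b \<in> Hpm" shows "pr_rep b \<in> Hmp"
  using pr_rep_spec[OF assms] by (elim conjE)

lemma pr_eq_ipMP_pr_rep:
  assumes "b \<in> Hpm" "a \<in> Hmp"
  shows "pr a b = ipMP a (pr_rep b)"
  using pr_rep_spec[OF assms(1)] assms(2) by (elim conjE) (rule bspec)

lemma pr_rep_add:
  assumes a: "a \<in> Hpm" and b: "b \<in> Hpm"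
  shows "pr_rep (a + b) = pr_rep a + pr_rep b"
proof (rule MP.ip_right_unique)
  show "pr_rep (a + b) \<in> Hmp" "pr_rep a + pr_rep b \<in> Hmp"
    using pr_rep_in a b by auto
  fix x assume x: "x \<in> Hmp"
  have "ipMP x (pr_rep (a + b)) = pr x a + pr x b"
    using pr_eq_ipMP_pr_rep[OF PM.add_in[OF a b] x] pr_add_right[OF x a b] by simp
  also have "\<dots> = ipMP x (pr_rep a + pr_rep b)"
    using pr_eq_ipMP_pr_rep[OF a x] pr_eq_ipMP_pr_rep[OF b x]
      MP.ip_add_right[OF x pr_rep_in[OF a] pr_rep_in[OF b]] by simp
  finally show "ipMP x (pr_rep (a + b)) = ipMP x (pr_rep a + pr_rep b)" .
qed

lemma pr_rep_scale:
  assumes a: "a \<in> Hpm"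
  shows "pr_rep (c *\<^sub>C a) = c *\<^sub>C pr_rep a"
proof (rule MP.ip_right_unique)
  show "pr_rep (c *\<^sub>C a) \<in> Hmp" "c *\<^sub>C pr_rep a \<in> Hmp"
    using pr_rep_in a by auto
  fix x assume x: "x \<in> Hmp"
  show "ipMP x (pr_rep (c *\<^sub>C a)) = ipMP x (c *\<^sub>C pr_rep a)"
    using pr_eq_ipMP_pr_rep[OF PM.scale_in[OF a] x] pr_scale_right[OF x a]
      pr_eq_ipMP_pr_rep[OF a x] MP.ip_scale_right[OF x pr_rep_in[OF a]] by simp
qed

lemma pr_rep_diff: "a \<in> Hpm \<Longrightarrow> b \<in> Hpm \<Longrightarrow> pr_rep (a - b) = pr_rep a - pr_rep b"
  using pr_rep_add[of "a - b" b] by (simp add: PM.diff_in)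

lemma hnorm_pr_rep_le:
  assumes g: "g \<in> Hpm"
  shows "hnorm ipMP (pr_rep g) \<le> pr_bound * hnorm ipPM g"
proof -
  have rep_in: "pr_rep g \<in> Hmp" using pr_rep_in[OF g] .
  have "hnorm ipMP (pr_rep g) * hnorm ipMP (pr_rep g) = Re (pr (pr_rep g) g)"
    using MP.hnorm_square[OF rep_in] pr_eq_ipMP_pr_rep[OF g rep_in] by (simp add: power2_eq_square)
  also have "\<dots> \<le> hnorm ipMP (pr_rep g) * (pr_bound * hnorm ipPM g)"
    using complex_Re_le_cmod[of "pr (pr_rep g) g"] cmod_pr_le[OF rep_in g] by (simp add: mult_ac)
  finally show ?thesis
    using MP.hnorm_nonneg[OF rep_in] pr_bound_nonneg PM.hnorm_nonneg[OF g]
    by (cases "hnorm ipMP (pr_rep g) = 0") auto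
qed

lemma hnorm_le_hnorm_pr_rep_on_H:
  assumes g: "g \<in> H" "g \<in> Hpm"
  shows "hnorm ipPM g \<le> hnorm ipMP (pr_rep g)"
proof (rule hnorm_Hpm_le[OF g MP.hnorm_nonneg[OF pr_rep_in[OF g(2)]]])
  fix h assume "h \<in> H" "h \<in> Hmp"
  then show "cmod (pr h g) \<le> hnorm ipMP (pr_rep g) * hnorm ipMP h"
    using MP.cauchy_schwarz[OF \<open>h \<in> Hmp\<close> pr_rep_in[OF g(2)]] pr_eq_ipMP_pr_rep[OF g(2)]
    by (simp add: mult.commute)
qed

lemma hnorm_le_hnorm_pr_rep:
  assumes g: "g \<in> Hpm"
  shows "hnorm ipPM g \<le> hnorm ipMP (pr_rep g)"
proof (rule field_le_epsilon)
  fix e :: real assume e: "e > 0"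
  define C where "C = pr_bound + 1"
  have C: "C > 0" unfolding C_def using pr_bound_nonneg by simp
  obtain g' where g': "g' \<in> H" "g' \<in> Hpm" "hnorm ipPM (g - g') < e / C"
    using hdense_Hpm g e C unfolding hdense_def by (meson IntD1 IntD2 divide_pos_pos)
  have "hnorm ipPM g \<le> hnorm ipPM (g - g') + hnorm ipPM g'"
    using PM.hnorm_triangle_diff[OF g g'(2) PM.zero_in] by simp
  also have "hnorm ipPM g' \<le> hnorm ipMP (pr_rep g')"
    using hnorm_le_hnorm_pr_rep_on_H[OF g'(1,2)] .
  also have "hnorm ipMP (pr_rep g') \<le> hnorm ipMP (pr_rep g' - pr_rep g) + hnorm ipMP (pr_rep g)"
    using MP.hnorm_triangle_diff[OF pr_rep_in[OF g'(2)] pr_rep_in[OF g] MP.zero_in] by simp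
  also have "hnorm ipMP (pr_rep g' - pr_rep g) \<le> pr_bound * hnorm ipPM (g - g')"
    using hnorm_pr_rep_le[OF PM.diff_in[OF g'(2) g]] pr_rep_diff[OF g'(2) g]
      PM.hnorm_minus_commute[OF g g'(2)] by simp
  finally have "hnorm ipPM g \<le> hnorm ipMP (pr_rep g) + C * hnorm ipPM (g - g')"
    unfolding C_def by (simp add: algebra_simps)
  also have "C * hnorm ipPM (g - g') \<le> e"
    using g'(3) C by (simp add: pos_less_divide_eq mult.commute)
  finally show "hnorm ipPM g \<le> hnorm ipMP (pr_rep g) + e" by simp
qed

lemma pr_left_nondegenerate:
  assumes z: "z \<in> Hmp" and zero: "\<And>g. g \<in> Hpm \<Longrightarrow> pr z g = 0"
  shows "z = 0"
proof -
  define C where "C = pr_bound + 1"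
  have C: "C > 0" unfolding C_def using pr_bound_nonneg by simp
  have "hnorm ipMP z \<le> 0"
  proof (rule field_le_epsilon)
    fix e :: real assume e: "e > 0"
    obtain z' where z': "z' \<in> H" "z' \<in> Hmp" "hnorm ipMP (z - z') < e / C"
      using hdense_Hmp z e C unfolding hdense_def by (meson IntD1 IntD2 divide_pos_pos)
    have "hnorm ipMP z' \<le> pr_bound * hnorm ipMP (z' - z)"
    proof (rule hnorm_Hmp_le[OF z'(1,2)])
      show "0 \<le> pr_bound * hnorm ipMP (z' - z)"
        using pr_bound_nonneg MP.hnorm_nonneg[OF MP.diff_in[OF z'(2) z]] by simp
      fix g assume g: "g \<in> H" "g \<in> Hpm"
      have "pr z' g = pr (z' - z) g" using pr_diff_left[OF z'(2) z g(2)] zero[OF g(2)] by simp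
      then show "cmod (pr z' g) \<le> pr_bound * hnorm ipMP (z' - z) * hnorm ipPM g"
        using cmod_pr_le[OF MP.diff_in[OF z'(2) z] g(2)] by simp
    qed
    then have "hnorm ipMP z \<le> hnorm ipMP (z - z') + pr_bound * hnorm ipMP (z - z')"
      using MP.hnorm_triangle_diff[OF z z'(2) MP.zero_in] MP.hnorm_minus_commute[OF z z'(2)] by simp
    also have "\<dots> = C * hnorm ipMP (z - z')" unfolding C_def by (simp add: algebra_simps)
    also have "\<dots> \<le> e" using z'(3) C by (simp add: pos_less_divide_eq mult.commute)
    finally show "hnorm ipMP z \<le> 0 + e" by simp
  qed
  then show ?thesis using MP.hnorm_eq_0_iff[OF z] MP.hnorm_nonneg[OF z] by simp
qed

lemma hconverges_pr_rep:
  assumes g: "\<And>n. g n \<in> Hpm" and b: "b \<in> Hpm" and conv: "hconverges ipPM g b"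
  shows "hconverges ipMP (\<lambda>n. pr_rep (g n)) (pr_rep b)"
  unfolding hconverges_def
proof (rule tendsto_sandwich)
  show "\<forall>\<^sub>F n in sequentially. 0 \<le> hnorm ipMP (pr_rep (g n) - pr_rep b)"
    using MP.hnorm_nonneg[OF MP.diff_in[OF pr_rep_in[OF g] pr_rep_in[OF b]]] by simp
  show "\<forall>\<^sub>F n in sequentially.
      hnorm ipMP (pr_rep (g n) - pr_rep b) \<le> pr_bound * hnorm ipPM (g n - b)"
    using hnorm_pr_rep_le[OF PM.diff_in[OF g b]] pr_rep_diff[OF g b] by simp
  show "(\<lambda>n. pr_bound * hnorm ipPM (g n - b)) \<longlonglongrightarrow> 0"
    using tendsto_mult_right_zero[of _ _ pr_bound] conv unfolding hconverges_def by blast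
qed simp

lemma csubspace_range_pr_rep: "csubspace (pr_rep ` Hpm)"
proof -
  have "pr_rep 0 = 0" using pr_rep_scale[OF PM.zero_in, of 0] by simp
  then have "0 \<in> pr_rep ` Hpm" using PM.zero_in by (metis image_eqI)
  moreover have "x + y \<in> pr_rep ` Hpm" if "x \<in> pr_rep ` Hpm" "y \<in> pr_rep ` Hpm" for x y
    using that by (auto simp: pr_rep_add[symmetric] intro!: imageI PM.add_in)
  moreover have "c *\<^sub>C x \<in> pr_rep ` Hpm" if "x \<in> pr_rep ` Hpm" for c x
    using that by (auto simp: pr_rep_scale[symmetric] intro!: imageI PM.scale_in)
  ultimately show ?thesis unfolding csubspace_def by blast
qed

lemma seq_closed_range_pr_rep: "MP.seq_closed (pr_rep ` Hpm)"
  unfolding MP.seq_closed_def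
proof (intro allI impI)
  fix u x assume "(\<forall>n. u n \<in> pr_rep ` Hpm) \<and> x \<in> Hmp \<and> hconverges ipMP u x"
  then have u: "\<forall>n. \<exists>b. b \<in> Hpm \<and> u n = pr_rep b" and x: "x \<in> Hmp"
    and ux: "hconverges ipMP u x"
    by auto
  obtain g where g_spec: "\<forall>n. g n \<in> Hpm \<and> u n = pr_rep (g n)"
    using choice[OF u] by blast
  then have g: "\<And>n. g n \<in> Hpm" and u_eq: "u = (\<lambda>n. pr_rep (g n))"
    by (simp_all add: fun_eq_iff)
  have "\<And>n. u n \<in> Hmp" using g pr_rep_in u_eq by simp
  have "hcauchy ipPM g"
    unfolding hcauchy_def
  proof (intro allI impI)
    fix e :: real assume "e > 0"
    then obtain N where N: "\<And>m n. m \<ge> N \<Longrightarrow> n \<ge> N \<Longrightarrow> hnorm ipMP (u m - u n) < e"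
      using MP.converges_imp_hcauchy[OF \<open>\<And>n. u n \<in> Hmp\<close> x ux] unfolding hcauchy_def by blast
    have "hnorm ipPM (g m - g n) < e" if "m \<ge> N" "n \<ge> N" for m n
    proof -
      have "hnorm ipPM (g m - g n) \<le> hnorm ipMP (u m - u n)"
        using hnorm_le_hnorm_pr_rep[OF PM.diff_in[OF g g]] pr_rep_diff[OF g g] u_eq by simp
      then show ?thesis using N[OF that] by linarith
    qed
    then show "\<exists>N. \<forall>m\<ge>N. \<forall>n\<ge>N. hnorm ipPM (g m - g n) < e" by blast
  qed
  then obtain b where b: "b \<in> Hpm" "hconverges ipPM g b" using PM.complete g by blast
  have "x = pr_rep b"
    using MP.hconverges_unique[OF \<open>\<And>n. u n \<in> Hmp\<close> x pr_rep_in[OF b(1)] ux]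
      hconverges_pr_rep[OF g b] u_eq by simp
  then show "x \<in> pr_rep ` Hpm" using b(1) by blast
qed

lemma range_pr_rep: "pr_rep ` Hpm = Hmp"
proof
  show sub: "pr_rep ` Hpm \<subseteq> Hmp" using pr_rep_in by blast
  show "Hmp \<subseteq> pr_rep ` Hpm"
  proof
    fix w assume w: "w \<in> Hmp"
    obtain m where m: "m \<in> pr_rep ` Hpm" and orth: "\<And>y. y \<in> pr_rep ` Hpm \<Longrightarrow> ipMP (w - m) y = 0"
      using MP.orthogonal_projection_exists[OF csubspace_range_pr_rep sub seq_closed_range_pr_rep w]
      by blast
    have wm: "w - m \<in> Hmp" using w m sub by blast
    have "w - m = 0"
    proof (rule pr_left_nondegenerate[OF wm])
      fix g assume g: "g \<in> Hpm"
      have "pr (w - m) g = ipMP (w - m) (pr_rep g)" using pr_eq_ipMP_pr_rep[OF g wm] .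
      also have "\<dots> = 0" using orth[OF imageI[OF g]] .
      finally show "pr (w - m) g = 0" .
    qed
    then show "w \<in> pr_rep ` Hpm" using m by simp
  qed
qed

lemma pr_represents_bounded_functional:
  assumes "bounded_functional_on Hmp ipMP \<phi>"
  obtains g where "g \<in> Hpm" "\<And>h. h \<in> Hmp \<Longrightarrow> \<phi> h = pr h g"
proof -
  obtain w where w: "w \<in> Hmp" "\<And>h. h \<in> Hmp \<Longrightarrow> \<phi> h = ipMP h w"
    using MP.riesz_representation[OF assms] by blast
  have "w \<in> pr_rep ` Hpm" using w(1) range_pr_rep by simp
  then obtain g where g: "g \<in> Hpm" "pr_rep g = w" by blast
  show ?thesis
  proof (rule that[OF g(1)])
    fix h assume "h \<in> Hmp"
    then show "\<phi> h = pr h g" using w(2) pr_eq_ipMP_pr_rep[OF g(1)] g(2) by simp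
  qed
qed

lemma bounded_functional_on_pr_compose:
  assumes V: "clinear_on H V" "\<And>x. x \<in> H \<Longrightarrow> V x \<in> Hmp"
    and bounded: "\<And>x. x \<in> H \<Longrightarrow> hnorm ipMP (V x) \<le> K * hnorm ipH x"
    and g: "g \<in> Hpm"
  shows "bounded_functional_on H ipH (\<lambda>f. pr (V f) g)"
proof (rule bounded_functional_onI[where K = "pr_bound * hnorm ipPM g * K"])
  show "pr (V (x + y)) g = pr (V x) g + pr (V y) g" if "x \<in> H" "y \<in> H" for x y
    using clinear_on_add[OF V(1) that] pr_add_left[OF V(2)[OF that(1)] V(2)[OF that(2)] g]
    by simp
  show "pr (V (c *\<^sub>C x)) g = c * pr (V x) g" if "x \<in> H" for c x
    using clinear_on_scale[OF V(1) that] pr_scale_left[OF V(2)[OF that] g] by simp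
  show "cmod (pr (V x) g) \<le> pr_bound * hnorm ipPM g * K * hnorm ipH x" if x: "x \<in> H" for x
  proof -
    have "cmod (pr (V x) g) \<le> pr_bound * hnorm ipPM g * hnorm ipMP (V x)"
      using cmod_pr_le[OF V(2)[OF x] g] by (simp add: mult_ac)
    also have "\<dots> \<le> pr_bound * hnorm ipPM g * (K * hnorm ipH x)"
      using bounded[OF x] pr_bound_nonneg PM.hnorm_nonneg[OF g] by (intro mult_left_mono) auto
    finally show ?thesis by (simp add: mult_ac)
  qed
qed

lemma pairing_adjoint_spec:
  assumes V: "clinear_on H V" "\<And>x. x \<in> H \<Longrightarrow> V x \<in> Hmp"
    and bounded: "\<And>x. x \<in> H \<Longrightarrow> hnorm ipMP (V x) \<le> K * hnorm ipH x"
    and g: "g \<in> Hpm"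
  shows "pairing_adjoint H ipH pr V g \<in> H
    \<and> (\<forall>f\<in>H. pr (V f) g = ipH f (pairing_adjoint H ipH pr V g))"
proof -
  have "bounded_functional_on H ipH (\<lambda>f. pr (V f) g)"
    using bounded_functional_on_pr_compose[OF V bounded g] .
  then obtain u where u: "u \<in> H" "\<And>f. f \<in> H \<Longrightarrow> pr (V f) g = ipH f u"
    using H.riesz_representation by blast
  have "pairing_adjoint H ipH pr V g = u"
    unfolding pairing_adjoint_def
  proof (rule the_equality)
    show "u \<in> H \<and> (\<forall>f\<in>H. pr (V f) g = ipH f u)" using u by simp
    fix u' assume "u' \<in> H \<and> (\<forall>f\<in>H. pr (V f) g = ipH f u')"
    then have u': "u' \<in> H" "\<And>f. f \<in> H \<Longrightarrow> pr (V f) g = ipH f u'" by auto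
    show "u' = u"
    proof (rule H.ip_right_unique[OF u'(1) u(1)])
      fix x assume "x \<in> H"
      then show "ipH x u' = ipH x u" using u'(2) u(2) by metis
    qed
  qed
  then show ?thesis using u by simp
qed

end

section \<open>The transformed boundary maps\<close>

locale mixed_duality_homeomorphism = mixed_duality +
  fixes V :: "'a \<Rightarrow> 'a"
  assumes linear_homeomorphism: "linear_homeomorphism H ipH Hmp ipMP V"
begin

abbreviation V_inv :: "'a \<Rightarrow> 'a" where "V_inv \<equiv> inv_into H V"

abbreviation V_sharp :: "'a \<Rightarrow> 'a" where "V_sharp \<equiv> pairing_adjoint H ipH pr V"

lemma clinear_on_V: "clinear_on H V"
  using linear_homeomorphism unfolding linear_homeomorphism_def by (elim conjE)

lemma bij_V: "bij_betw V H Hmp"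
  using linear_homeomorphism unfolding linear_homeomorphism_def by (elim conjE)

lemma V_in: "x \<in> H \<Longrightarrow> V x \<in> Hmp"
  using bij_betw_apply[OF bij_V] .

lemma V_inv_in: "a \<in> Hmp \<Longrightarrow> V_inv a \<in> H"
  using bij_betw_apply[OF bij_betw_inv_into[OF bij_V]] .

lemma V_V_inv: "a \<in> Hmp \<Longrightarrow> V (V_inv a) = a"
  using bij_betw_inv_into_right[OF bij_V] .

lemma V_inv_V: "x \<in> H \<Longrightarrow> V_inv (V x) = x"
  using bij_betw_inv_into_left[OF bij_V] .

lemma clinear_on_V_inv: "clinear_on Hmp V_inv"
  using clinear_on_inv_into[OF H.csubspace clinear_on_V bij_V] .

lemma V_bounded: "\<exists>K. \<forall>x\<in>H. hnorm ipMP (V x) \<le> K * hnorm ipH x"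
proof -
  have "hcontinuous_on H ipH V ipMP"
    using linear_homeomorphism unfolding linear_homeomorphism_def by (elim conjE)
  then show ?thesis
    using hcontinuous_clinear_bounded[OF H.inner_product_on MP.inner_product_on clinear_on_V V_in]
    by metis
qed

lemma V_inv_bounded: "\<exists>K. \<forall>a\<in>Hmp. hnorm ipH (V_inv a) \<le> K * hnorm ipMP a"
proof -
  have "hcontinuous_on Hmp ipMP V_inv ipH"
    using linear_homeomorphism unfolding linear_homeomorphism_def by (elim conjE)
  then show ?thesis
    using hcontinuous_clinear_bounded[OF MP.inner_product_on H.inner_product_on clinear_on_V_inv V_inv_in]
    by metis
qed

lemma V_sharp_spec:
  assumes "g \<in> Hpm"
  shows "V_sharp g \<in> H \<and> (\<forall>f\<in>H. pr (V f) g = ipH f (V_sharp g))"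
proof -
  obtain K where "\<And>x. x \<in> H \<Longrightarrow> hnorm ipMP (V x) \<le> K * hnorm ipH x"
    using V_bounded by blast
  then show ?thesis using pairing_adjoint_spec[OF clinear_on_V V_in _ assms] by blast
qed

lemma V_sharp_in: assumes "g \<in> Hpm" shows "V_sharp g \<in> H"
  using V_sharp_spec[OF assms] by (elim conjE)

lemma pr_V_eq_ipH_V_sharp:
  assumes "g \<in> Hpm" "f \<in> H"
  shows "pr (V f) g = ipH f (V_sharp g)"
  using V_sharp_spec[OF assms(1)] assms(2) by (elim conjE) (rule bspec)

lemma pr_eq_ipH_V_inv_V_sharp:
  assumes "a \<in> Hmp" "b \<in> Hpm"
  shows "pr a b = ipH (V_inv a) (V_sharp b)"
  using pr_V_eq_ipH_V_sharp[OF assms(2) V_inv_in[OF assms(1)]] V_V_inv[OF assms(1)] by simp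

lemma cnj_pr_eq_ipH_V_sharp_V_inv:
  assumes "a \<in> Hmp" "b \<in> Hpm"
  shows "cnj (pr a b) = ipH (V_sharp b) (V_inv a)"
  using pr_eq_ipH_V_inv_V_sharp[OF assms] H.ip_commute_cnj[OF V_inv_in V_sharp_in] assms by simp

lemma clinear_on_V_sharp: "clinear_on Hpm V_sharp"
proof -
  have "V_sharp (a + b) = V_sharp a + V_sharp b" if a: "a \<in> Hpm" and b: "b \<in> Hpm" for a b
  proof (rule H.ip_right_unique)
    show "V_sharp (a + b) \<in> H" "V_sharp a + V_sharp b \<in> H"
      using V_sharp_in[OF PM.add_in[OF a b]] V_sharp_in[OF a] V_sharp_in[OF b] by auto
    fix x assume x: "x \<in> H"
    have "ipH x (V_sharp (a + b)) = pr (V x) a + pr (V x) b"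
      using pr_V_eq_ipH_V_sharp[OF PM.add_in[OF a b] x] pr_add_right[OF V_in[OF x] a b] by simp
    also have "\<dots> = ipH x (V_sharp a + V_sharp b)"
      using pr_V_eq_ipH_V_sharp[OF a x] pr_V_eq_ipH_V_sharp[OF b x]
        H.ip_add_right[OF x V_sharp_in[OF a] V_sharp_in[OF b]] by simp
    finally show "ipH x (V_sharp (a + b)) = ipH x (V_sharp a + V_sharp b)" .
  qed
  moreover have "V_sharp (c *\<^sub>C a) = c *\<^sub>C V_sharp a" if a: "a \<in> Hpm" for c a
  proof (rule H.ip_right_unique)
    show "V_sharp (c *\<^sub>C a) \<in> H" "c *\<^sub>C V_sharp a \<in> H"
      using V_sharp_in[OF PM.scale_in[OF a]] V_sharp_in[OF a] by auto
    fix x assume x: "x \<in> H"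
    have "ipH x (V_sharp (c *\<^sub>C a)) = cnj c * pr (V x) a"
      using pr_V_eq_ipH_V_sharp[OF PM.scale_in[OF a] x] pr_scale_right[OF V_in[OF x] a] by simp
    also have "\<dots> = ipH x (c *\<^sub>C V_sharp a)"
      using pr_V_eq_ipH_V_sharp[OF a x] H.ip_scale_right[OF x V_sharp_in[OF a]] by simp
    finally show "ipH x (V_sharp (c *\<^sub>C a)) = ipH x (c *\<^sub>C V_sharp a)" .
  qed
  ultimately show ?thesis unfolding clinear_on_def by blast
qed

lemma V_sharp_surj:
  assumes b: "b \<in> H"
  obtains g where "g \<in> Hpm" "V_sharp g = b"
proof -
  obtain K where K: "\<And>a. a \<in> Hmp \<Longrightarrow> hnorm ipH (V_inv a) \<le> K * hnorm ipMP a"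
    using V_inv_bounded by blast
  have "bounded_functional_on Hmp ipMP (\<lambda>a. ipH (V_inv a) b)"
  proof (rule bounded_functional_onI[where K = "K * hnorm ipH b"])
    show "ipH (V_inv (x + y)) b = ipH (V_inv x) b + ipH (V_inv y) b" if "x \<in> Hmp" "y \<in> Hmp" for x y
      using clinear_on_add[OF clinear_on_V_inv that]
        H.ip_add_left[OF V_inv_in[OF that(1)] V_inv_in[OF that(2)] b] by simp
    show "ipH (V_inv (c *\<^sub>C x)) b = c * ipH (V_inv x) b" if "x \<in> Hmp" for c x
      using clinear_on_scale[OF clinear_on_V_inv that] H.ip_scale_left[OF V_inv_in[OF that] b]
      by simp
    show "cmod (ipH (V_inv x) b) \<le> K * hnorm ipH b * hnorm ipMP x" if x: "x \<in> Hmp" for x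
    proof -
      have "cmod (ipH (V_inv x) b) \<le> hnorm ipH (V_inv x) * hnorm ipH b"
        using H.cauchy_schwarz[OF V_inv_in[OF x] b] .
      also have "\<dots> \<le> K * hnorm ipMP x * hnorm ipH b"
        using K[OF x] H.hnorm_nonneg[OF b] by (rule mult_right_mono)
      finally show ?thesis by (simp add: mult_ac)
    qed
  qed
  then obtain g where g: "g \<in> Hpm" "\<And>a. a \<in> Hmp \<Longrightarrow> ipH (V_inv a) b = pr a g"
    using pr_represents_bounded_functional by blast
  have "V_sharp g = b"
  proof (rule H.ip_right_unique[OF V_sharp_in[OF g(1)] b])
    fix x assume x: "x \<in> H"
    have "ipH x (V_sharp g) = pr (V x) g" using pr_V_eq_ipH_V_sharp[OF g(1) x] by simp
    also have "\<dots> = ipH x b" using g(2)[OF V_in[OF x]] V_inv_V[OF x] by simp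
    finally show "ipH x (V_sharp g) = ipH x b" .
  qed
  with g(1) show ?thesis by (rule that)
qed

lemma boundary_triple_of_m_boundary_tuple:
  assumes "m_boundary_tuple X ipX D A H ipH Hmp ipMP Hpm ipPM pr G0 G1"
  shows "boundary_triple X ipX D A H ipH (\<lambda>f. V_inv (G0 f)) (\<lambda>f. V_sharp (G1 f))"
proof -
  define DS where "DS = adj_dom X ipX D A"
  define As where "As = adj X ipX D A"
  from assms have G0: "clinear_on DS G0" and G1: "clinear_on DS G1"
    and into: "\<forall>f\<in>DS. G0 f \<in> Hmp \<and> G1 f \<in> Hpm"
    and onto: "\<forall>a\<in>Hmp. \<forall>b\<in>Hpm. \<exists>f\<in>DS. G0 f = a \<and> G1 f = b"
    and green: "\<forall>f\<in>DS. \<forall>g\<in>DS. ipX (As f) g - ipX f (As g) = cnj (pr (G0 g) (G1 f)) - pr (G0 f) (G1 g)"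
    unfolding m_boundary_tuple_def Let_def DS_def[symmetric] As_def[symmetric] by simp_all
  have G0_in: "\<And>f. f \<in> DS \<Longrightarrow> G0 f \<in> Hmp" and G1_in: "\<And>f. f \<in> DS \<Longrightarrow> G1 f \<in> Hpm"
    using into by auto
  have linear: "clinear_on DS (\<lambda>f. V_inv (G0 f))" "clinear_on DS (\<lambda>f. V_sharp (G1 f))"
    using clinear_on_compose[OF G0 _ clinear_on_V_inv] clinear_on_compose[OF G1 _ clinear_on_V_sharp]
      into by blast+
  have in_H: "\<forall>f\<in>DS. V_inv (G0 f) \<in> H \<and> V_sharp (G1 f) \<in> H"
    using V_inv_in[OF G0_in] V_sharp_in[OF G1_in] by blast
  have onto_H: "\<forall>a\<in>H. \<forall>b\<in>H. \<exists>f\<in>DS. V_inv (G0 f) = a \<and> V_sharp (G1 f) = b"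
  proof (intro ballI)
    fix a b assume a: "a \<in> H" and b: "b \<in> H"
    obtain g where g: "g \<in> Hpm" "V_sharp g = b" using V_sharp_surj[OF b] .
    obtain f where f: "f \<in> DS" "G0 f = V a" "G1 f = g" using onto V_in[OF a] g(1) by blast
    show "\<exists>f\<in>DS. V_inv (G0 f) = a \<and> V_sharp (G1 f) = b"
      using f g(2) V_inv_V[OF a] by (intro bexI[OF _ f(1)]) simp
  qed
  have green_H: "\<forall>f\<in>DS. \<forall>g\<in>DS. ipX (As f) g - ipX f (As g)
      = ipH (V_sharp (G1 f)) (V_inv (G0 g)) - ipH (V_inv (G0 f)) (V_sharp (G1 g))"
  proof (intro ballI)
    fix f g assume f: "f \<in> DS" and g: "g \<in> DS"
    show "ipX (As f) g - ipX f (As g)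
        = ipH (V_sharp (G1 f)) (V_inv (G0 g)) - ipH (V_inv (G0 f)) (V_sharp (G1 g))"
      using green f g cnj_pr_eq_ipH_V_sharp_V_inv[OF G0_in[OF g] G1_in[OF f]]
        pr_eq_ipH_V_inv_V_sharp[OF G0_in[OF f] G1_in[OF g]] by simp
  qed
  show ?thesis
    unfolding boundary_triple_def Let_def DS_def[symmetric] As_def[symmetric]
    using linear in_H onto_H green_H by (intro conjI)
qed

end

theorem proposition6p2:
  fixes X :: "'x::cvector set" and ipX :: "'x \<Rightarrow> 'x \<Rightarrow> complex"
    and D :: "'x set" and A :: "'x \<Rightarrow> 'x"
    and H Hmp Hpm :: "'a::cvector set" and ipH ipMP ipPM pr :: "'a \<Rightarrow> 'a \<Rightarrow> complex"
    and G0 G1 :: "'x \<Rightarrow> 'a" and V :: "'a \<Rightarrow> 'a"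
  assumes "hilbert_space X ipX"
    and "closed_densely_defined_symmetric X ipX D A"
    and "m_boundary_tuple X ipX D A H ipH Hmp ipMP Hpm ipPM pr G0 G1"
    and "linear_homeomorphism H ipH Hmp ipMP V"
  shows "boundary_triple X ipX D A H ipH
           (\<lambda>f. inv_into H V (G0 f)) (\<lambda>f. pairing_adjoint H ipH pr V (G1 f))"
proof -
  have "mixed_order_duality H ipH Hmp ipMP Hpm ipPM pr"
    using assms(3) unfolding m_boundary_tuple_def Let_def by (elim conjE)
  then interpret mixed_duality_homeomorphism H ipH Hmp ipMP Hpm ipPM pr V
    by (intro mixed_duality_homeomorphism.intro mixed_duality.intro
        mixed_duality_homeomorphism_axioms.intro assms(4))
  show ?thesis using boundary_triple_of_m_boundary_tuple[OF assms(3)] .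
qed

end
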